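(* Let $\mathcal D$ be a dyadic grid on $\mathbb T$, let $v$ be a weight on $\mathbb D$ that is doubling with respect to $\mathcal D$ with constant $c_v$, and let $w\in\mathrm{B}_\infty(\mathcal D,v)$ satisfy the APR($\mathcal D$) condition. Then there exists $\tau>1$, depending only on $[w]_{\mathrm{B}_\infty(\mathcal D,v)}$ and $c_v$, such that $w\in\mathrm{RH}_\tau(\mathcal D,v)$.
   Context: $\mathbb D$ is the open unit disc, $\mathbb T$ the unit circle, $dA$ normalized area measure. A weight is a locally integrable, a.e. positive function. For measurable $f$, $0<p<\infty$, weight $v$, measurable $E$: $\langle f\rangle_{p,v,E}=\big(\int_E|f|^pv\,dA\big)^{1/p}/\big(\int_Ev\,dA\big)^{1/p}$, $\langle f\rangle_{v,E}=\langle f\rangle_{1,v,E}$. For an arc $I\subset\mathbb T$ with center $e^{i\theta_0}$ and normalized arclength $\ell(I)$ ($\ell(\mathbb T)=1$), $Q_I=\{re^{i\theta}\in\mathbb D:1-r\le\ell(I),|\theta-\theta_0|\le\ell(I)/2\}$ and $T_I=\{re^{i\theta}\in\mathbb D:\ell(I)/2\le1-r\le\ell(I),|\theta-\theta_0|\le\ell(I)/2\}$. A dyadic grid $\mathcal D$ is a collection of arcs of $\mathbb T$ such that: for each $k\in\mathbb N$, $\{I\in\mathcal D:\ell(I)=2^{-k}\}$ partitions $\mathbb T$; $\{T_I:I\in\mathcal D\}$ partitions $\mathbb D$; any two arcs of $\mathcal D$ are disjoint or nested; each $I\in\mathcal D$ is the union of $2^k$ arcs of $\mathcal D$ of length $2^{-k}\ell(I)$.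 $v$ is doubling with respect to $\mathcal D$ if there is $c_v>0$ such that for all $I\subset J$ in $\mathcal D$ with $\ell(J)=2\ell(I)$, $c_v^{-1}\int_{Q_J}v\,dA\le\int_{Q_I}v\,dA\le c_v\int_{T_I}v\,dA$. $M_v^{\mathcal D}f(z)=\sup_{I\in\mathcal D:z\in Q_I}\langle f\rangle_{v,Q_I}$. $w\in\mathrm{B}_\infty(\mathcal D,v)$ if $[w]_{\mathrm{B}_\infty(\mathcal D,v)}=\sup_{I\in\mathcal D}\langle M_v^{\mathcal D}(w\chi_{Q_I})\rangle_{v,Q_I}/\langle w\rangle_{v,Q_I}<\infty$. $w$ satisfies APR($\mathcal D$) if there is $C>0$ with $C^{-1}w(z_2)\le w(z_1)\le Cw(z_2)$ for all $z_1,z_2\in T_I$ and all $I\in\mathcal D$. For $1<s<\infty$, $w\in\mathrm{RH}_s(\mathcal D,v)$ if $\sup_{I\in\mathcal D}\langle w\rangle_{s,v,Q_I}(\langle w\rangle_{v,Q_I})^{-1}<\infty$. *)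

theory Defs
  imports "HOL-Analysis.Analysis"
begin

text \<open>Normalized area measure dA on the plane (only sets inside the unit disc are used).\<close>
definition dA :: "complex measure" where
  "dA = density lebesgue (\<lambda>_. ennreal (1 / pi))"

text \<open>An arc of the unit circle is represented by a pair (c, l): c is the centre in normalized
  angle units (the centre is cis (2 pi c)) and l = normalized arclength, 0 < l <= 1.\<close>
type_synonym arc = "real \<times> real"

definition arc_len :: "arc \<Rightarrow> real" where
  "arc_len I = snd I"

definition arc_set :: "arc \<Rightarrow> complex set" where
  "arc_set I = {cis (2 * pi * t) | t. \<bar>t - fst I\<bar> \<le> snd I / 2}"

definition Qbox :: "arc \<Rightarrow> complex set" where
  "Qbox I = {complex_of_real r * cis (2 * pi * t) | r t.
      0 \<le> r \<and> r < 1 \<and> 1 - r \<le> snd I \<and> \<bar>t - fst I\<bar> \<le> snd I / 2}"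

definition Tbox :: "arc \<Rightarrow> complex set" where
  "Tbox I = {complex_of_real r * cis (2 * pi * t) | r t.
      0 \<le> r \<and> r < 1 \<and> snd I / 2 \<le> 1 - r \<and> 1 - r \<le> snd I \<and> \<bar>t - fst I\<bar> \<le> snd I / 2}"

text \<open>Since arcs and the sets T_I are closed, "partition" and "disjoint" are
  understood up to boundaries: distinct arcs meet in finitely many points, distinct T_I meet
  in a Lebesgue-null set.\<close>
definition dyadic_grid :: "arc set \<Rightarrow> bool" where
  "dyadic_grid D \<longleftrightarrow>
     (\<forall>I\<in>D. 0 < arc_len I \<and> arc_len I \<le> 1) \<and>
     (\<forall>k::nat. (\<Union>I\<in>{I\<in>D. arc_len I = 1 / 2 ^ k}. arc_set I) = sphere 0 1 \<and>
               pairwise (\<lambda>I J. finite (arc_set I \<inter> arc_set J)) {I\<in>D. arc_len I = 1 / 2 ^ k}) \<and>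
     (\<Union>I\<in>D. Tbox I) = ball 0 1 \<and>
     pairwise (\<lambda>I J. Tbox I \<inter> Tbox J \<in> null_sets lebesgue) D \<and>
     (\<forall>I\<in>D. \<forall>J\<in>D. arc_set I \<subseteq> arc_set J \<or> arc_set J \<subseteq> arc_set I \<or>
                     finite (arc_set I \<inter> arc_set J)) \<and>
     (\<forall>I\<in>D. \<forall>k::nat. \<exists>S\<subseteq>D. card S = 2 ^ k \<and> (\<forall>J\<in>S. arc_len J = arc_len I / 2 ^ k) \<and>
                     arc_set I = (\<Union>J\<in>S. arc_set J))"

definition weight :: "(complex \<Rightarrow> real) \<Rightarrow> bool" where
  "weight v \<longleftrightarrow> v \<in> borel_measurable lebesgue \<and>
     (\<forall>K. compact K \<and> K \<subseteq> ball 0 1 \<longrightarrow> set_integrable dA K v) \<and>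
     (AE z in dA. z \<in> ball 0 1 \<longrightarrow> 0 < v z)"

definition vmass :: "(complex \<Rightarrow> real) \<Rightarrow> complex set \<Rightarrow> ennreal" where
  "vmass v E = (\<integral>\<^sup>+ z\<in>E. ennreal (v z) \<partial>dA)"

definition avg :: "(complex \<Rightarrow> real) \<Rightarrow> complex set \<Rightarrow> (complex \<Rightarrow> ennreal) \<Rightarrow> ennreal" where
  "avg v E f = (\<integral>\<^sup>+ z\<in>E. f z * ennreal (v z) \<partial>dA) / vmass v E"

definition avgp :: "real \<Rightarrow> (complex \<Rightarrow> real) \<Rightarrow> complex set \<Rightarrow> (complex \<Rightarrow> real) \<Rightarrow> ennreal" where
  "avgp p v E f = (let a = avg v E (\<lambda>z. ennreal (\<bar>f z\<bar> powr p)) in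
      if a = top then top else ennreal (enn2real a powr (1 / p)))"

definition doubling :: "arc set \<Rightarrow> (complex \<Rightarrow> real) \<Rightarrow> real \<Rightarrow> bool" where
  "doubling D v c \<longleftrightarrow> 0 < c \<and>
     (\<forall>I\<in>D. \<forall>J\<in>D. arc_set I \<subseteq> arc_set J \<and> arc_len J = 2 * arc_len I \<longrightarrow>
        ennreal (1 / c) * vmass v (Qbox J) \<le> vmass v (Qbox I) \<and>
        vmass v (Qbox I) \<le> ennreal c * vmass v (Tbox I))"

definition dyadic_max :: "arc set \<Rightarrow> (complex \<Rightarrow> real) \<Rightarrow> (complex \<Rightarrow> ennreal) \<Rightarrow> complex \<Rightarrow> ennreal" where
  "dyadic_max D v f z = (SUP I\<in>{I\<in>D. z \<in> Qbox I}. avg v (Qbox I) f)"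

definition Binf_const :: "arc set \<Rightarrow> (complex \<Rightarrow> real) \<Rightarrow> (complex \<Rightarrow> real) \<Rightarrow> ennreal" where
  "Binf_const D v w = (SUP I\<in>D.
      avg v (Qbox I) (dyadic_max D v (\<lambda>z. ennreal (\<bar>w z\<bar>) * indicator (Qbox I) z))
      / avg v (Qbox I) (\<lambda>z. ennreal \<bar>w z\<bar>))"

definition Binf :: "arc set \<Rightarrow> (complex \<Rightarrow> real) \<Rightarrow> (complex \<Rightarrow> real) \<Rightarrow> bool" where
  "Binf D v w \<longleftrightarrow> (\<forall>I\<in>D. avg v (Qbox I) (\<lambda>z. ennreal \<bar>w z\<bar>) < top) \<and> Binf_const D v w < top"

definition APR :: "arc set \<Rightarrow> (complex \<Rightarrow> real) \<Rightarrow> bool" where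
  "APR D w \<longleftrightarrow> (\<exists>C>0. \<forall>I\<in>D. \<forall>z1\<in>Tbox I. \<forall>z2\<in>Tbox I.
      w z2 / C \<le> w z1 \<and> w z1 \<le> C * w z2)"

definition RH :: "arc set \<Rightarrow> (complex \<Rightarrow> real) \<Rightarrow> real \<Rightarrow> (complex \<Rightarrow> real) \<Rightarrow> bool" where
  "RH D v s w \<longleftrightarrow> 1 < s \<and> (\<forall>I\<in>D. avg v (Qbox I) (\<lambda>z. ennreal \<bar>w z\<bar>) < top) \<and>
     (SUP I\<in>D. avgp s v (Qbox I) w / avg v (Qbox I) (\<lambda>z. ennreal \<bar>w z\<bar>)) < top"

end

(* Gehring-type self-improvement.  Fix a box Q(I0) and a depth N, and let f(z) be the largest average
   <w>_{v,Q(J)} over the finitely many dyadic J inside I0 of length at least 2^-N l(I0) with z in Q(J).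
   For lambda >= a = <w>_{v,Q(I0)} the set {f > lambda} is the almost disjoint union of the maximal
   boxes Q(J) with <w>_{v,Q(J)} > lambda.  On each of them f is dominated by M(w chi_Q(J)), and the
   parent of J has average at most lambda, so the B_infinity condition and doubling give
   int_{f > lambda} f v <= B c lambda v(f > lambda).  Summing over the layers lambda = 2^k a yields
   int f^(1+e) v <= B a^(1+e) v(Q(I0)) + 2 (2^e - 1) B c int f^(1+e) v, and the last term is absorbed
   once 2 (2^e - 1) B c <= 1/2.  Finally APR and doubling give |w| <= C^2 c^2 f on the top halves
   T(J) of the family, and these exhaust Q(I0) as N grows. *)

theory Submission
  imports Defs
begin

section \<open>Polar sectors\<close>

definition sector :: "arc \<Rightarrow> real \<Rightarrow> real \<Rightarrow> complex set" where
  "sector A a b = {complex_of_real r * u | r u. u \<in> arc_set A \<and> 0 \<le> r \<and> r < 1 \<and> a \<le> 1 - r \<and> 1 - r \<le> b}"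

definition rays :: "complex set \<Rightarrow> complex set" where
  "rays U = {complex_of_real r * u | r u. u \<in> U}"

definition polar :: "real \<times> real \<Rightarrow> complex" where
  "polar p = complex_of_real (fst p) * cis (2 * pi * snd p)"

lemma Tbox_eq_sector: "Tbox I = sector I (snd I / 2) (snd I)"
  unfolding Tbox_def sector_def arc_set_def by blast

lemma Qbox_eq_sector: "Qbox I = sector I 0 (snd I)"
  unfolding Qbox_def sector_def arc_set_def by fastforce

lemma norm_arc_set: "u \<in> arc_set A \<Longrightarrow> norm u = 1"
  unfolding arc_set_def by auto

lemma norm_sector_point: "u \<in> arc_set A \<Longrightarrow> 0 \<le> r \<Longrightarrow> norm (complex_of_real r * u) = r"
  by (simp add: norm_mult norm_arc_set)

lemma sector_mono: "arc_set A \<subseteq> arc_set B \<Longrightarrow> a' \<le> a \<Longrightarrow> b \<le> b' \<Longrightarrow> sector A a b \<subseteq> sector B a' b'"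
  unfolding sector_def by fastforce

lemma sector_subset_ball: "sector A a b \<subseteq> ball 0 1"
  unfolding sector_def by (auto simp: norm_sector_point)

lemma sector_Int_subset_rays: "sector A a b \<inter> sector B a' b' \<subseteq> rays (arc_set A \<inter> arc_set B) \<union> {0}"
proof
  fix z assume "z \<in> sector A a b \<inter> sector B a' b'"
  then obtain r u r' u' where z: "z = complex_of_real r * u" "u \<in> arc_set A" "0 \<le> r"
     "z = complex_of_real r' * u'" "u' \<in> arc_set B" "0 \<le> r'"
    unfolding sector_def by blast
  have "norm z = r" using z(1-3) by (simp add: norm_sector_point)
  moreover have "norm z = r'" using z(4-6) by (simp add: norm_sector_point)
  ultimately have "r = 0 \<or> u = u'" using z by auto
  with z show "z \<in> rays (arc_set A \<inter> arc_set B) \<union> {0}"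
    unfolding rays_def by auto
qed

lemma negligible_rays: assumes "finite U" shows "negligible (rays U \<union> {0})"
proof -
  have line: "negligible (span {u})" for u :: complex
  proof (rule negligible_lowdim)
    have "dim (span {u}) \<le> card {u}"
      unfolding dim_span by (rule dim_le_card') simp
    then show "dim (span {u}) < DIM(complex)" by simp
  qed
  have "rays U \<union> {0} \<subseteq> (\<Union>u\<in>U. span {u}) \<union> span {}"
    unfolding rays_def by (auto simp: span_singleton scaleR_conv_of_real)
  moreover have "negligible ((\<Union>u\<in>U. span {u}) \<union> span {})"
    using assms line by (intro negligible_Un negligible_Union) auto
  ultimately show ?thesis using negligible_subset by blast
qed

lemma rotate_mem_sector:
  assumes "\<bar>Arg y\<bar> \<le> pi * snd A" "norm y < 1" "a \<le> 1 - norm y" "1 - norm y \<le> b"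
  shows "y * cis (2 * pi * fst A) \<in> sector A a b"
proof -
  define t where "t = fst A + Arg y / (2 * pi)"
  have "complex_of_real (norm y) * cis (Arg y) = y" using rcis_cmod_Arg[of y] by (simp add: rcis_def)
  then have "y * cis (2 * pi * fst A) = complex_of_real (norm y) * cis (Arg y) * cis (2 * pi * fst A)"
    by simp
  also have "\<dots> = complex_of_real (norm y) * cis (2 * pi * t)"
    by (simp add: t_def mult.assoc cis_mult distrib_left algebra_simps)
  finally have "y * cis (2 * pi * fst A) = complex_of_real (norm y) * cis (2 * pi * t)" .
  moreover have "\<bar>t - fst A\<bar> \<le> snd A / 2"
    using assms(1) by (simp add: t_def abs_divide field_simps)
  then have "cis (2 * pi * t) \<in> arc_set A" unfolding arc_set_def by blast
  ultimately show ?thesis using assms(2-4) unfolding sector_def by force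
qed

text \<open>The sector contains a ball around its centre, by the continuity of \<^const>\<open>Arg\<close> away
  from the negative real axis.\<close>

lemma sector_not_negligible:
  assumes "0 < snd A" "0 \<le> a" "a < b" "b \<le> 1"
  shows "\<not> negligible (sector A a b)"
proof
  assume neg: "negligible (sector A a b)"
  define u0 where "u0 = cis (2 * pi * fst A)"
  define r0 where "r0 = 1 - (a + b) / 2"
  have r0: "0 < r0" "r0 < 1" using assms unfolding r0_def by auto
  have "continuous (at (complex_of_real r0)) Arg"
    using r0 by (intro continuous_at_Arg) (simp add: complex_nonpos_Reals_iff)
  moreover have "0 < pi * snd A" using assms by simp
  ultimately obtain d1 where d1: "d1 > 0"
    "\<And>y. dist y (complex_of_real r0) < d1 \<Longrightarrow> dist (Arg y) (Arg (complex_of_real r0)) < pi * snd A"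
    unfolding continuous_at_eps_delta by metis
  define d where "d = min d1 ((b - a) / 2)"
  have "d > 0" using d1 assms by (simp add: d_def)
  have u0: "norm u0 = 1" "u0 \<noteq> 0" by (auto simp: u0_def)
  have "ball (of_real r0 * u0) d \<subseteq> sector A a b"
  proof
    fix z assume z: "z \<in> ball (of_real r0 * u0) d"
    define y where "y = z / u0"
    have "y - of_real r0 = (z - of_real r0 * u0) / u0" using u0 by (simp add: y_def field_simps)
    then have "dist y r0 = norm (z - of_real r0 * u0)" using u0 by (simp add: dist_norm norm_divide)
    then have dy: "dist y r0 < d" using z by (simp add: dist_norm norm_minus_commute)
    have "\<bar>norm y - r0\<bar> \<le> norm (y - of_real r0)"
      by (metis norm_of_real norm_triangle_ineq3 abs_of_pos r0(1))
    also have "\<dots> < (b - a) / 2" using dy by (simp add: d_def dist_norm)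
    finally have "norm y - r0 < (b - a) / 2" "r0 - norm y < (b - a) / 2" by linarith+
    then have "norm y < 1" "a \<le> 1 - norm y" "1 - norm y \<le> b"
      using assms unfolding r0_def by argo+
    moreover have "\<bar>Arg y\<bar> \<le> pi * snd A" using dy d1(2)[of y] r0 by (simp add: d_def dist_real_def)
    moreover have "z = y * u0" using u0 by (simp add: y_def)
    ultimately show "z \<in> sector A a b" using rotate_mem_sector[of y A a b] unfolding u0_def by simp
  qed
  then have "negligible (ball (of_real r0 * u0) d)" using neg negligible_subset by blast
  then show False using open_not_negligible[of "ball (of_real r0 * u0) d"] \<open>d > 0\<close> by auto
qed

lemma sector_eq_polar_image:
  assumes "0 \<le> a" "b \<le> 1"
  shows "sector A a b
    = polar ` ({1 - b .. 1 - a} \<times> {fst A - snd A / 2 .. fst A + snd A / 2}) \<inter> ball 0 1"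
proof (intro equalityI subsetI)
  fix z assume z: "z \<in> sector A a b"
  then obtain r t where rt: "z = complex_of_real r * cis (2 * pi * t)" "r < 1" "a \<le> 1 - r" "1 - r \<le> b"
      "\<bar>t - fst A\<bar> \<le> snd A / 2"
    unfolding sector_def arc_set_def by blast
  then have "fst A - snd A / 2 \<le> t" "t \<le> fst A + snd A / 2"
    using abs_le_D1[OF rt(5)] abs_le_D2[OF rt(5)] by linarith+
  with rt have "z = polar (r, t)" "(r, t) \<in> {1 - b .. 1 - a} \<times> {fst A - snd A / 2 .. fst A + snd A / 2}"
    by (auto simp: polar_def)
  then show "z \<in> polar ` ({1 - b .. 1 - a} \<times> {fst A - snd A / 2 .. fst A + snd A / 2}) \<inter> ball 0 1"
    using z sector_subset_ball by blast
next
  fix z assume "z \<in> polar ` ({1 - b .. 1 - a} \<times> {fst A - snd A / 2 .. fst A + snd A / 2}) \<inter> ball 0 1"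
  then obtain r t where rt: "(r, t) \<in> {1 - b .. 1 - a} \<times> {fst A - snd A / 2 .. fst A + snd A / 2}"
      "z = polar (r, t)" "norm z < 1"
    by auto
  have "\<bar>t - fst A\<bar> \<le> snd A / 2" using rt(1) unfolding abs_le_iff by auto
  then have "cis (2 * pi * t) \<in> arc_set A" unfolding arc_set_def by blast
  moreover have "0 \<le> r" "a \<le> 1 - r" "1 - r \<le> b" using rt(1) assms by auto
  moreover from this have "r < 1" using rt(2,3) by (simp add: polar_def norm_mult)
  ultimately show "z \<in> sector A a b" unfolding sector_def polar_def rt(2) by auto
qed

lemma compact_polar_image: "compact (polar ` ({a..b} \<times> {c..d}))"
  unfolding polar_def by (intro compact_continuous_image compact_Times continuous_intros) auto

lemma compact_sector:
  assumes "0 < a" "b \<le> 1"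
  shows "compact (sector A a b)"
proof -
  let ?P = "polar ` ({1 - b .. 1 - a} \<times> {fst A - snd A / 2 .. fst A + snd A / 2})"
  have "?P \<subseteq> ball 0 1" using assms by (auto simp: polar_def norm_mult)
  then have "sector A a b = ?P" using sector_eq_polar_image[of a b A] assms by auto
  then show ?thesis using compact_polar_image by simp
qed

lemma closed_sets_lebesgue: "closed S \<Longrightarrow> S \<in> sets lebesgue"
  by (metis borel_closed sets_completionI_sets sets_lborel)

lemma sets_lebesgue_sector:
  assumes "0 \<le> a" "b \<le> 1"
  shows "sector A a b \<in> sets lebesgue"
  unfolding sector_eq_polar_image[OF assms]
  by (intro sets.Int closed_sets_lebesgue compact_imp_closed compact_polar_image
      fmeasurableD lmeasurable_ball)

lemma sector_eq_UN:
  assumes "0 < l"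
  shows "sector A 0 b = (\<Union>N. sector A (l / 2 ^ (N + 1)) b)"
proof (intro equalityI subsetI)
  fix z assume "z \<in> sector A 0 b"
  then obtain r u where ru: "z = complex_of_real r * u" "u \<in> arc_set A" "0 \<le> r" "r < 1" "1 - r \<le> b"
    unfolding sector_def by blast
  obtain N where "l / (1 - r) < 2 ^ N" using real_arch_pow[of 2 "l / (1 - r)"] by auto
  moreover have "(2::real) ^ N \<le> 2 ^ (N + 1)" by simp
  ultimately have "l / (1 - r) < 2 ^ (N + 1)" by linarith
  then have "l / 2 ^ (N + 1) \<le> 1 - r" using ru(4) by (simp add: field_simps)
  then have "z \<in> sector A (l / 2 ^ (N + 1)) b" using ru unfolding sector_def by blast
  then show "z \<in> (\<Union>N. sector A (l / 2 ^ (N + 1)) b)" by blast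
next
  fix z assume "z \<in> (\<Union>N. sector A (l / 2 ^ (N + 1)) b)"
  then obtain N where "z \<in> sector A (l / 2 ^ (N + 1)) b" by blast
  moreover have "sector A (l / 2 ^ (N + 1)) b \<subseteq> sector A 0 b" using assms by (intro sector_mono) auto
  ultimately show "z \<in> sector A 0 b" by blast
qed

lemma incseq_sector: "0 \<le> l \<Longrightarrow> incseq (\<lambda>N. sector A (l / 2 ^ (N + 1)) b)"
  by (intro monoI sector_mono divide_left_mono power_increasing) auto

section \<open>Dyadic grids\<close>

lemma dyadic_scale_bounded:
  fixes l x :: real
  assumes "l / 2 ^ (N + 1) \<le> x" "x \<le> l"
  shows "\<exists>k\<le>N. l / 2 ^ (k + 1) \<le> x \<and> x \<le> l / 2 ^ k"
  using assms(1)
proof (induction N)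
  case 0
  then show ?case using assms(2) by (intro exI[of _ 0]) simp
next
  case (Suc N)
  show ?case
  proof (cases "l / 2 ^ (N + 1) \<le> x")
    case True
    then obtain k where "k \<le> N" "l / 2 ^ (k + 1) \<le> x \<and> x \<le> l / 2 ^ k" using Suc.IH by blast
    then show ?thesis by (intro exI[of _ k]) simp
  next
    case False
    with Suc.prems show ?thesis by (intro exI[of _ "Suc N"]) simp
  qed
qed

lemma dyadic_scale:
  fixes l x :: real
  assumes "0 < x" "x \<le> l"
  shows "\<exists>k. l / 2 ^ (k + 1) < x \<and> x \<le> l / 2 ^ k"
proof -
  obtain N where "l / x < 2 ^ N"
    using real_arch_pow[of 2 "l / x"] by auto
  moreover have "(2::real) ^ N \<le> 2 ^ (N + 1)" by simp
  ultimately have "l / x < 2 ^ (N + 1)" by linarith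
  then have "l / 2 ^ (N + 1) \<le> x" using assms(1) by (simp add: field_simps)
  then obtain k where k: "l / 2 ^ (k + 1) \<le> x" "x \<le> l / 2 ^ k"
    using dyadic_scale_bounded assms(2) by blast
  show ?thesis
  proof (cases "l / 2 ^ (k + 1) = x")
    case True
    then show ?thesis using assms by (intro exI[of _ "k + 1"]) (auto simp: field_simps)
  next
    case False
    then show ?thesis using k by (intro exI[of _ k]) auto
  qed
qed

lemma infinite_Int_of_finite_cover:
  assumes "infinite A" "A \<subseteq> (\<Union>P\<in>S. f P)" "finite S"
  shows "\<exists>P\<in>S. infinite (A \<inter> f P)"
proof (rule ccontr)
  assume "\<not> ?thesis"
  then have "finite (\<Union>P\<in>S. A \<inter> f P)" using assms(3) by (intro finite_UN_I) auto
  moreover have "A = (\<Union>P\<in>S. A \<inter> f P)" using assms(2) by blast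
  ultimately show False using assms(1) by simp
qed

locale grid =
  fixes D :: "arc set"
  assumes dyadic_grid: "dyadic_grid D"
begin

lemmas dyadic_grid_unfolded = dyadic_grid[unfolded dyadic_grid_def arc_len_def]

lemma len_bounds: "I \<in> D \<Longrightarrow> 0 < snd I \<and> snd I \<le> 1"
  using dyadic_grid_unfolded[THEN conjunct1] by blast

lemma nested_or_almost_disjoint:
  "I \<in> D \<Longrightarrow> J \<in> D \<Longrightarrow> arc_set I \<subseteq> arc_set J \<or> arc_set J \<subseteq> arc_set I \<or> finite (arc_set I \<inter> arc_set J)"
  using dyadic_grid_unfolded[THEN conjunct2, THEN conjunct2, THEN conjunct2, THEN conjunct2, THEN conjunct1]
  by blast

lemma negligible_Tbox_Int: "I \<in> D \<Longrightarrow> J \<in> D \<Longrightarrow> I \<noteq> J \<Longrightarrow> negligible (Tbox I \<inter> Tbox J)"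
  using dyadic_grid_unfolded[THEN conjunct2, THEN conjunct2, THEN conjunct2, THEN conjunct1]
  unfolding pairwise_def negligible_iff_null_sets by blast

lemma subdivision:
  assumes "I \<in> D"
  obtains S where "S \<subseteq> D" "finite S" "card S = 2 ^ k" "\<And>J. J \<in> S \<Longrightarrow> snd J = snd I / 2 ^ k"
    "arc_set I = (\<Union>J\<in>S. arc_set J)"
proof -
  from dyadic_grid_unfolded[THEN conjunct2, THEN conjunct2, THEN conjunct2, THEN conjunct2, THEN conjunct2,
      rule_format, OF assms, of k]
  obtain S where S: "S \<subseteq> D" "card S = 2 ^ k" "\<forall>J\<in>S. snd J = snd I / 2 ^ k"
      "arc_set I = (\<Union>J\<in>S. arc_set J)"
    by (elim exE conjE)
  moreover have "finite S" using S(2) by (intro card_ge_0_finite) simp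
  ultimately show ?thesis by (intro that) auto
qed

text \<open>Otherwise a strip of \<^term>\<open>Tbox J\<close> of positive measure would lie in the null set
  of overlaps of \<^term>\<open>Tbox J\<close> with the top halves \<^term>\<open>Tbox P\<close>, \<^term>\<open>P \<in> S\<close>.\<close>

lemma mem_of_cover_comparable_len:
  assumes J: "J \<in> D" and S: "S \<subseteq> D" "finite S" and cover: "arc_set J \<subseteq> (\<Union>P\<in>S. arc_set P)"
    and len: "\<And>P. P \<in> S \<Longrightarrow> snd P = p" "snd J / 2 < p" "p / 2 < snd J"
  shows "J \<in> S"
proof (rule ccontr)
  assume "J \<notin> S"
  define a where "a = max (snd J) p / 2"
  define b where "b = min (snd J) p"
  have "sector J a b \<subseteq> (\<Union>P\<in>S. Tbox J \<inter> Tbox P)"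
  proof
    fix z assume "z \<in> sector J a b"
    then obtain r u where z: "z = complex_of_real r * u" "u \<in> arc_set J" "0 \<le> r" "r < 1"
        "a \<le> 1 - r" "1 - r \<le> b"
      unfolding sector_def by blast
    then obtain P where P: "P \<in> S" "u \<in> arc_set P" using cover by blast
    have "snd J / 2 \<le> 1 - r" "1 - r \<le> snd J" "snd P / 2 \<le> 1 - r" "1 - r \<le> snd P"
      using z(5,6) len(1)[OF P(1)] unfolding a_def b_def by auto
    then have "z \<in> sector J (snd J / 2) (snd J)" "z \<in> sector P (snd P / 2) (snd P)"
      using z(1-4) P(2) unfolding sector_def by blast+
    then show "z \<in> (\<Union>P\<in>S. Tbox J \<inter> Tbox P)" using P by (auto simp: Tbox_eq_sector)
  qed
  moreover have "negligible (\<Union>P\<in>S. Tbox J \<inter> Tbox P)"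
    using S \<open>J \<notin> S\<close> J by (intro negligible_Union) (auto intro!: negligible_Tbox_Int)
  ultimately have "negligible (sector J a b)" using negligible_subset by blast
  moreover have "0 \<le> a" "a < b" "b \<le> 1" "0 < snd J"
    using len_bounds[OF J] len unfolding a_def b_def by auto
  ultimately show False using sector_not_negligible by blast
qed

lemma eq_of_subset_comparable_len:
  assumes "J \<in> D" "K \<in> D" "arc_set J \<subseteq> arc_set K" "snd J / 2 < snd K" "snd K / 2 < snd J"
  shows "J = K"
  using mem_of_cover_comparable_len[of J "{K}" "snd K"] assms by auto

lemma infinite_arc_set: assumes "J \<in> D" shows "infinite (arc_set J)"
proof
  assume "finite (arc_set J)"
  then have "negligible (rays (arc_set J \<inter> arc_set J) \<union> {0})" by (intro negligible_rays) simp
  moreover have "Tbox J \<subseteq> rays (arc_set J \<inter> arc_set J) \<union> {0}"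
    using sector_Int_subset_rays[of J "snd J / 2" "snd J" J "snd J / 2" "snd J"]
    by (simp add: Tbox_eq_sector)
  ultimately have "negligible (sector J (snd J / 2) (snd J))"
    using negligible_subset by (metis Tbox_eq_sector)
  then show False using sector_not_negligible len_bounds[OF assms] by auto
qed

lemma len_le_of_subset:
  assumes J: "J \<in> D" and I: "I \<in> D" and sub: "arc_set J \<subseteq> arc_set I"
  shows "snd J \<le> snd I"
proof (rule ccontr)
  assume "\<not> snd J \<le> snd I"
  moreover have "0 < snd I" using len_bounds[OF I] by simp
  ultimately obtain n where n: "snd J / 2 ^ (n + 1) < snd I" "snd I \<le> snd J / 2 ^ n"
    using dyadic_scale[of "snd I" "snd J"] by auto
  obtain S where S: "S \<subseteq> D" "finite S" "card S = 2 ^ n" "\<And>P. P \<in> S \<Longrightarrow> snd P = snd J / 2 ^ n"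
      "arc_set J = (\<Union>P\<in>S. arc_set P)"
    using subdivision[OF J] by metis
  have "S \<subseteq> {I}"
  proof
    fix P assume P: "P \<in> S"
    have "P \<in> D" "arc_set P \<subseteq> arc_set I" using P S(1,5) sub by auto
    moreover have "snd P / 2 = snd J / 2 ^ (n + 1)" using S(4)[OF P] by simp
    then have "snd P / 2 < snd I" using n(1) by linarith
    moreover have "snd I / 2 < snd P" using S(4)[OF P] n(2) \<open>0 < snd I\<close> by linarith
    ultimately show "P \<in> {I}" using eq_of_subset_comparable_len I by blast
  qed
  then have "card S \<le> 1" using card_mono[of "{I}" S] by simp
  then have "n = 0" using S(3) one_less_power[of "2::nat" n] by linarith
  then have "S = {I}" using \<open>S \<subseteq> {I}\<close> S(3) by (auto simp: subset_singleton_iff)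
  then show False using S(4)[of I] \<open>n = 0\<close> \<open>\<not> snd J \<le> snd I\<close> by simp
qed

lemma len_eq_of_subset:
  assumes J: "J \<in> D" and I: "I \<in> D" and sub: "arc_set J \<subseteq> arc_set I"
  obtains k where "snd J = snd I / 2 ^ k"
proof -
  obtain k where k: "snd I / 2 ^ (k + 1) < snd J" "snd J \<le> snd I / 2 ^ k"
    using dyadic_scale len_le_of_subset[OF assms] len_bounds[OF J] by blast
  obtain S where S: "S \<subseteq> D" "finite S" "\<And>P. P \<in> S \<Longrightarrow> snd P = snd I / 2 ^ k"
      "arc_set I = (\<Union>P\<in>S. arc_set P)"
    using subdivision[OF I] by metis
  have "snd J / 2 < snd I / 2 ^ k" using k(2) len_bounds[OF J] by linarith
  moreover have "snd I / 2 ^ k / 2 < snd J" using k(1) by (simp add: field_simps)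
  ultimately have "J \<in> S"
    using mem_of_cover_comparable_len[OF J S(1,2) _ S(3)] sub S(4) by blast
  then show ?thesis using S(3) that by blast
qed

definition descendants :: "arc \<Rightarrow> nat \<Rightarrow> arc set" where
  "descendants I N = {J\<in>D. arc_set J \<subseteq> arc_set I \<and> snd I / 2 ^ N \<le> snd J}"

lemma finite_descendants:
  assumes I: "I \<in> D"
  shows "finite (descendants I N)"
proof -
  have level: "finite {J\<in>D. arc_set J \<subseteq> arc_set I \<and> snd J = snd I / 2 ^ k}" for k
  proof -
    obtain S where S: "S \<subseteq> D" "finite S" "\<And>P. P \<in> S \<Longrightarrow> snd P = snd I / 2 ^ k"
        "arc_set I = (\<Union>P\<in>S. arc_set P)"
      using subdivision[OF I] by metis
    have "{J\<in>D. arc_set J \<subseteq> arc_set I \<and> snd J = snd I / 2 ^ k} \<subseteq> S"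
    proof
      fix J assume J: "J \<in> {J\<in>D. arc_set J \<subseteq> arc_set I \<and> snd J = snd I / 2 ^ k}"
      moreover have "0 < snd I / 2 ^ k" using len_bounds[OF I] by simp
      ultimately show "J \<in> S"
        using mem_of_cover_comparable_len[of J S "snd I / 2 ^ k"] S by auto
    qed
    then show ?thesis using S(2) by (rule finite_subset)
  qed
  have "descendants I N \<subseteq> (\<Union>k\<le>N. {J\<in>D. arc_set J \<subseteq> arc_set I \<and> snd J = snd I / 2 ^ k})"
  proof
    fix J assume J: "J \<in> descendants I N"
    then obtain k where k: "snd J = snd I / 2 ^ k"
      using len_eq_of_subset[of J I] I unfolding descendants_def by blast
    then have "snd I / 2 ^ N \<le> snd I / 2 ^ k" using J unfolding descendants_def by simp
    then have "(2::real) ^ k \<le> 2 ^ N" using len_bounds[OF I] by (simp add: field_simps)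
    then have "k \<le> N" by simp
    with J k show "J \<in> (\<Union>k\<le>N. {J\<in>D. arc_set J \<subseteq> arc_set I \<and> snd J = snd I / 2 ^ k})"
      unfolding descendants_def by auto
  qed
  then show ?thesis using level by (rule finite_subset[OF _ finite_UN_I[OF finite_atMost]])
qed

lemma parent_exists:
  assumes I: "I \<in> D" and J: "J \<in> D" and sub: "arc_set J \<subseteq> arc_set I" and "J \<noteq> I"
  obtains P where "P \<in> D" "arc_set P \<subseteq> arc_set I" "arc_set J \<subseteq> arc_set P" "snd P = 2 * snd J"
proof -
  obtain k where k: "snd J = snd I / 2 ^ k" using len_eq_of_subset[OF J I sub] by blast
  have "k \<noteq> 0"
  proof
    assume "k = 0"
    then have "snd J = snd I" using k by simp
    then show False using eq_of_subset_comparable_len[OF J I sub] len_bounds[OF I] \<open>J \<noteq> I\<close> by simp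
  qed
  then obtain k' where k': "k = Suc k'" by (cases k) auto
  obtain S where S: "S \<subseteq> D" "finite S" "\<And>P. P \<in> S \<Longrightarrow> snd P = snd I / 2 ^ k'"
      "arc_set I = (\<Union>P\<in>S. arc_set P)"
    using subdivision[OF I] by metis
  obtain P where P: "P \<in> S" "infinite (arc_set J \<inter> arc_set P)"
    using infinite_Int_of_finite_cover[OF infinite_arc_set[OF J] _ S(2)] sub S(4) by blast
  have PD: "P \<in> D" and len_P: "snd P = 2 * snd J" using P(1) S(1,3) k k' by auto
  have "\<not> arc_set P \<subseteq> arc_set J"
    using len_le_of_subset[OF PD J] len_P len_bounds[OF J] by auto
  then have "arc_set J \<subseteq> arc_set P" using nested_or_almost_disjoint[OF J PD] P(2) by blast
  moreover have "arc_set P \<subseteq> arc_set I" using P(1) S(4) by blast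
  ultimately show ?thesis using that PD len_P by blast
qed

lemma child_exists:
  assumes "J \<in> D"
  obtains J1 where "J1 \<in> D" "arc_set J1 \<subseteq> arc_set J" "snd J = 2 * snd J1"
proof -
  obtain S where S: "S \<subseteq> D" "card S = 2 ^ 1" "\<And>P. P \<in> S \<Longrightarrow> snd P = snd J / 2 ^ 1"
      "arc_set J = (\<Union>P\<in>S. arc_set P)"
    using subdivision[OF assms] by metis
  then have "S \<noteq> {}" by auto
  then obtain P where "P \<in> S" by blast
  then show ?thesis using that[of P] S by auto
qed

lemma Qbox_mono: "J \<in> D \<Longrightarrow> K \<in> D \<Longrightarrow> arc_set J \<subseteq> arc_set K \<Longrightarrow> Qbox J \<subseteq> Qbox K"
  unfolding Qbox_eq_sector by (intro sector_mono len_le_of_subset) auto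

lemma Tbox_subset_Qbox: "J \<in> D \<Longrightarrow> Tbox J \<subseteq> Qbox J"
  unfolding Qbox_eq_sector Tbox_eq_sector by (intro sector_mono) (auto dest: len_bounds)

lemma negligible_Qbox_Int:
  assumes "J \<in> D" "K \<in> D" "\<not> arc_set J \<subseteq> arc_set K" "\<not> arc_set K \<subseteq> arc_set J"
  shows "negligible (Qbox J \<inter> Qbox K)"
proof -
  have "finite (arc_set J \<inter> arc_set K)" using nested_or_almost_disjoint[OF assms(1,2)] assms(3,4) by blast
  then have "negligible (rays (arc_set J \<inter> arc_set K) \<union> {0})" by (rule negligible_rays)
  moreover have "Qbox J \<inter> Qbox K \<subseteq> rays (arc_set J \<inter> arc_set K) \<union> {0}"
    unfolding Qbox_eq_sector by (rule sector_Int_subset_rays)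
  ultimately show ?thesis using negligible_subset by blast
qed

lemma Tbox_cover:
  assumes I: "I \<in> D" and z: "z \<in> sector I (snd I / 2 ^ (N + 1)) (snd I)"
  obtains J where "J \<in> descendants I N" "z \<in> Tbox J"
proof -
  obtain r u where ru: "z = complex_of_real r * u" "u \<in> arc_set I" "0 \<le> r" "r < 1"
      "snd I / 2 ^ (N + 1) \<le> 1 - r" "1 - r \<le> snd I"
    using z unfolding sector_def by blast
  obtain k where k: "k \<le> N" "snd I / 2 ^ (k + 1) \<le> 1 - r" "1 - r \<le> snd I / 2 ^ k"
    using dyadic_scale_bounded[OF ru(5,6)] by blast
  obtain S where S: "S \<subseteq> D" "\<And>P. P \<in> S \<Longrightarrow> snd P = snd I / 2 ^ k"
      "arc_set I = (\<Union>P\<in>S. arc_set P)"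
    using subdivision[OF I] by metis
  obtain P where P: "P \<in> S" "u \<in> arc_set P" using ru(2) S(3) by blast
  have "snd P / 2 \<le> 1 - r" "1 - r \<le> snd P" using k(2,3) S(2)[OF P(1)] by simp_all
  then have "z \<in> Tbox P" unfolding Tbox_eq_sector sector_def using ru(1,3,4) P(2) by blast
  moreover have "snd I / 2 ^ N \<le> snd I / 2 ^ k"
    using k(1) len_bounds[OF I] by (intro divide_left_mono) (auto intro: power_increasing)
  then have "P \<in> descendants I N" unfolding descendants_def using P S by auto
  ultimately show ?thesis using that by blast
qed

lemma Tbox_Int_child_nonempty:
  assumes "J \<in> D" "arc_set J1 \<subseteq> arc_set J" "snd J = 2 * snd J1"
  shows "Tbox J \<inter> Tbox J1 \<noteq> {}"
proof -
  define u where "u = cis (2 * pi * fst J1)"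
  define r where "r = 1 - snd J / 2"
  have "u \<in> arc_set J1" unfolding u_def arc_set_def using assms len_bounds[OF assms(1)] by force
  then have u: "u \<in> arc_set J1" "u \<in> arc_set J" using assms(2) by blast+
  have "0 \<le> r" "r < 1" "snd J / 2 \<le> 1 - r" "1 - r \<le> snd J" "snd J1 / 2 \<le> 1 - r" "1 - r \<le> snd J1"
    using len_bounds[OF assms(1)] assms(3) unfolding r_def by auto
  then have "complex_of_real r * u \<in> Tbox J" "complex_of_real r * u \<in> Tbox J1"
    using u unfolding Tbox_eq_sector sector_def by blast+
  then show ?thesis by blast
qed

end

section \<open>Dyadic layers\<close>

lemma realpow_powr: "0 < x \<Longrightarrow> (x ^ k) powr e = (x powr e) ^ k"
  for x e :: real
proof -
  assume "0 < x"
  then have "(x ^ k) powr e = (x powr real k) powr e" by (simp add: powr_realpow)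
  also have "\<dots> = (x powr e) ^ k" using \<open>0 < x\<close> by (simp add: powr_powr powr_power mult.commute)
  finally show ?thesis .
qed

lemma sum_power_le_twice_last:
  fixes x :: real
  assumes "2 \<le> x"
  shows "(\<Sum>k<Suc m. x ^ k) \<le> 2 * x ^ m"
proof (induction m)
  case (Suc m)
  have "(\<Sum>k<Suc (Suc m). x ^ k) \<le> 2 * x ^ m + x ^ Suc m" using Suc.IH by simp
  also have "2 * x ^ m \<le> x ^ Suc m" using assms by (simp add: mult_right_mono)
  finally show ?case by simp
qed simp

definition layer_index :: "real \<Rightarrow> real \<Rightarrow> nat" where
  "layer_index a t = (LEAST k. t \<le> a * 2 ^ k)"

lemma le_layer_index:
  assumes "0 < a"
  shows "t \<le> a * 2 ^ layer_index a t"
proof -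
  obtain n where "t / a < 2 ^ n" using real_arch_pow[of 2 "t / a"] by auto
  then have "t \<le> a * 2 ^ n" using assms by (simp add: field_simps)
  then show ?thesis unfolding layer_index_def by (rule LeastI)
qed

lemma less_layer_index_iff:
  assumes "0 < a"
  shows "a * 2 ^ k < t \<longleftrightarrow> k < layer_index a t"
proof
  assume "k < layer_index a t"
  then show "a * 2 ^ k < t" unfolding layer_index_def using not_less_Least by force
next
  assume t: "a * 2 ^ k < t"
  show "k < layer_index a t"
  proof (rule ccontr)
    assume "\<not> k < layer_index a t"
    then have "a * 2 ^ layer_index a t \<le> a * 2 ^ k" using assms by (simp add: power_increasing)
    then show False using le_layer_index[OF assms, of t] t by simp
  qed
qed

lemma powr_le_layer_sum:
  assumes "0 < a" "0 \<le> t" "0 \<le> e"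
  shows "t powr e \<le> a powr e + (2 powr e - 1) * (\<Sum>k<layer_index a t. (a * 2 ^ k) powr e)"
proof -
  define K where "K = layer_index a t"
  define q where "q = (2::real) powr e"
  have geometric: "(q - 1) * (\<Sum>k<K. q ^ k) = q ^ K - 1" by (simp add: power_diff_1_eq)
  have "t powr e \<le> (a * 2 ^ K) powr e"
    using assms le_layer_index[OF assms(1)] unfolding K_def by (intro powr_mono2) auto
  also have "\<dots> = a powr e + a powr e * ((q - 1) * (\<Sum>k<K. q ^ k))"
    using assms(1) unfolding geometric by (simp add: q_def powr_mult realpow_powr algebra_simps)
  also have "\<dots> = a powr e + (q - 1) * (\<Sum>k<K. (a * 2 ^ k) powr e)"
    using assms(1) by (simp add: q_def powr_mult realpow_powr sum_distrib_left mult_ac)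
  finally show ?thesis unfolding K_def q_def .
qed

lemma layer_sum_powr_le:
  assumes "0 < a" "0 \<le> t" "1 \<le> s"
  shows "(\<Sum>k<layer_index a t. (a * 2 ^ k) powr s) \<le> 2 * t powr s"
proof (cases "layer_index a t")
  case 0
  then show ?thesis using assms(2) by simp
next
  case (Suc m)
  define x where "x = (2::real) powr s"
  have "2 \<le> x" unfolding x_def using powr_mono[OF assms(3), of 2] by simp
  have "(\<Sum>k<n. (a * 2 ^ k) powr s) = a powr s * (\<Sum>k<n. x ^ k)" for n
    unfolding x_def using assms(1) by (simp add: powr_mult realpow_powr sum_distrib_left)
  then have "(\<Sum>k<layer_index a t. (a * 2 ^ k) powr s) = a powr s * (\<Sum>k<Suc m. x ^ k)"
    unfolding Suc .
  also have "\<dots> \<le> a powr s * (2 * x ^ m)"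
    using sum_power_le_twice_last[OF \<open>2 \<le> x\<close>] by (intro mult_left_mono) auto
  also have "\<dots> = 2 * (a * 2 ^ m) powr s"
    unfolding x_def using assms(1) by (simp add: powr_mult realpow_powr)
  also have "\<dots> \<le> 2 * t powr s"
    using less_layer_index_iff[OF assms(1), of m t] Suc assms by (intro mult_left_mono powr_mono2) auto
  finally show ?thesis .
qed

lemma ennreal_absorb_half:
  fixes x y :: ennreal
  assumes "x < top" "x \<le> y + ennreal (1 / 2) * x"
  shows "x \<le> 2 * y"
proof (cases "y = top")
  case False
  define r s where "r = enn2real x" and "s = enn2real y"
  have rs: "x = ennreal r" "y = ennreal s" "0 \<le> r" "0 \<le> s"
    using assms(1) False by (simp_all add: r_def s_def less_top)
  have half: "ennreal (1 / 2) * ennreal r = ennreal (r / 2)" using rs(3) by (subst ennreal_mult[symmetric]) auto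
  have sum: "ennreal s + ennreal (r / 2) = ennreal (s + r / 2)" using rs(3,4) by simp
  have "ennreal r \<le> ennreal (s + r / 2)" using assms(2) unfolding rs(1,2) half sum .
  then have "r \<le> s + r / 2" using rs(3,4) by (subst (asm) ennreal_le_iff) auto
  then have "r \<le> 2 * s" by simp
  then have "ennreal r \<le> ennreal (2 * s)" by (rule ennreal_leI)
  then show ?thesis using rs by (simp add: ennreal_mult)
qed simp

lemma ennreal_powr_mult_self:
  fixes l k e :: real
  assumes "0 < l" "0 \<le> k"
  shows "ennreal (l powr e) * (ennreal (k * l) * V) = ennreal k * (ennreal (l powr (1 + e)) * V)"
proof -
  have "ennreal (l powr e) * (ennreal (k * l) * V) = ennreal (l powr e * (k * l)) * V"
    using assms by (simp add: ennreal_mult mult.assoc)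
  also have "l powr e * (k * l) = k * l powr (1 + e)" using assms(1) by (simp add: powr_add)
  finally show ?thesis using assms by (simp add: ennreal_mult mult.assoc)
qed

section \<open>Integrals against the area measure\<close>

lemma sets_dA [simp]: "sets dA = sets lebesgue"
  by (simp add: dA_def)

lemma space_dA [simp]: "space dA = UNIV"
  by (simp add: dA_def)

lemma borel_measurable_dA: "borel_measurable dA = borel_measurable lebesgue"
  by (rule measurable_cong_sets) simp_all

lemma AE_dA_iff: "(AE z in dA. P z) \<longleftrightarrow> (AE z in lebesgue. P z)"
  unfolding dA_def by (subst AE_density) auto

lemma AE_dA_not_in_negligible: "negligible N \<Longrightarrow> AE z in dA. z \<notin> N"
  unfolding AE_dA_iff negligible_iff_null_sets by (rule AE_not_in)

lemma negligible_of_AE_dA_not_in: "N \<in> sets lebesgue \<Longrightarrow> AE z in dA. z \<notin> N \<Longrightarrow> negligible N"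
  unfolding AE_dA_iff negligible_iff_null_sets by (simp add: AE_iff_null_sets)

lemma vmass_mono: "X \<subseteq> Y \<Longrightarrow> vmass v X \<le> vmass v Y"
  unfolding vmass_def by (intro nn_integral_mono) (auto simp: indicator_def)

lemma ennreal_le_mult_of_divide_le:
  fixes p q :: ennreal
  assumes "p / q \<le> ennreal b" "q < top"
  shows "p \<le> ennreal b * q"
proof (cases "q = 0")
  case True
  then have "p = 0" using assms(1) by (auto simp: top_unique split: if_splits)
  then show ?thesis by simp
next
  case False
  have "p = (p / q) * q" using False assms(2) by (simp add: ennreal_divide_times)
  also have "\<dots> \<le> ennreal b * q" using assms(1) by (intro mult_right_mono) auto
  finally show ?thesis .
qed

lemma nn_integral_UN_almost_disjoint:
  assumes S: "finite S" and A: "\<And>i. i \<in> S \<Longrightarrow> A i \<in> sets dA"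
    and disj: "\<And>i j. i \<in> S \<Longrightarrow> j \<in> S \<Longrightarrow> i \<noteq> j \<Longrightarrow> negligible (A i \<inter> A j)"
    and g: "g \<in> borel_measurable dA"
  shows "(\<integral>\<^sup>+ z\<in>(\<Union>i\<in>S. A i). g z \<partial>dA) = (\<Sum>i\<in>S. \<integral>\<^sup>+ z\<in>A i. g z \<partial>dA)"
proof -
  define P where "P = (\<Union>i\<in>S. \<Union>j\<in>S - {i}. A i \<inter> A j)"
  have "negligible (\<Union>j\<in>S - {i}. A i \<inter> A j)" if "i \<in> S" for i
    using S disj that by (intro negligible_Union) auto
  then have "negligible P" unfolding P_def using S by (intro negligible_Union) auto
  have "disjoint_family_on (\<lambda>i. A i - P) S" unfolding disjoint_family_on_def P_def by blast
  note indicator_UN = indicator_UN_disjoint[OF S this]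
  have "AE z in dA. g z * indicator (\<Union>i\<in>S. A i) z = (\<Sum>i\<in>S. g z * indicator (A i) z)"
    using AE_dA_not_in_negligible[OF \<open>negligible P\<close>]
  proof eventually_elim
    case (elim z)
    have "indicator (\<Union>i\<in>S. A i) z = (indicator (\<Union>i\<in>S. A i - P) z :: ennreal)"
      using elim by (auto simp: indicator_def)
    also have "\<dots> = (\<Sum>i\<in>S. indicator (A i - P) z)" by (rule indicator_UN)
    also have "\<dots> = (\<Sum>i\<in>S. indicator (A i) z)"
      using elim by (intro sum.cong) (auto simp: indicator_def)
    finally show ?case by (simp add: sum_distrib_left)
  qed
  then have "(\<integral>\<^sup>+ z\<in>(\<Union>i\<in>S. A i). g z \<partial>dA) = (\<integral>\<^sup>+ z. (\<Sum>i\<in>S. g z * indicator (A i) z) \<partial>dA)"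
    by (rule nn_integral_cong_AE)
  also have "\<dots> = (\<Sum>i\<in>S. \<integral>\<^sup>+ z\<in>A i. g z \<partial>dA)"
    by (intro nn_integral_sum borel_measurable_times_ennreal borel_measurable_indicator g A)
  finally show ?thesis .
qed

lemma set_nn_integral_le_of_incseq:
  assumes "incseq A" "\<And>n. A n \<in> sets M" "g \<in> borel_measurable M"
    and bound: "\<And>n. (\<integral>\<^sup>+ x\<in>A n. g x \<partial>M) \<le> b"
  shows "(\<integral>\<^sup>+ x\<in>(\<Union>n. A n). g x \<partial>M) \<le> b"
proof -
  have "(\<integral>\<^sup>+ x\<in>(\<Union>n. A n). g x \<partial>M) = emeasure (density M g) (\<Union>n. A n)"
    using assms(2,3) by (simp add: emeasure_density sets.countable_UN)
  also have "\<dots> = (SUP n. emeasure (density M g) (A n))"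
    using assms(1,2) by (intro SUP_emeasure_incseq[symmetric]) auto
  also have "\<dots> \<le> b"
    using assms(2,3) bound by (intro SUP_least) (simp add: emeasure_density)
  finally show ?thesis .
qed

section \<open>Doubling, \<open>B\<^sub>\<infinity>\<close> and APR weights\<close>

locale weighted_grid = grid D for D +
  fixes v w :: "complex \<Rightarrow> real" and c B C :: real
  assumes weight_v: "weight v" and weight_w: "weight w"
    and doubling: "doubling D v c" and c_ge_1: "1 \<le> c"
    and Binf: "Binf D v w" and Binf_const_le: "Binf_const D v w \<le> ennreal B" and B_ge_1: "1 \<le> B"
    and C_ge_1: "1 \<le> C"
    and APR_bound: "\<And>I z1 z2. I \<in> D \<Longrightarrow> z1 \<in> Tbox I \<Longrightarrow> z2 \<in> Tbox I \<Longrightarrow> \<bar>w z1\<bar> \<le> C * \<bar>w z2\<bar>"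
begin

lemma v_measurable [measurable]: "v \<in> borel_measurable dA"
  using weight_v unfolding weight_def by (simp add: borel_measurable_dA)

lemma w_measurable [measurable]: "w \<in> borel_measurable dA"
  using weight_w unfolding weight_def by (simp add: borel_measurable_dA)

lemma sets_Qbox [measurable]: "I \<in> D \<Longrightarrow> Qbox I \<in> sets dA"
  unfolding Qbox_eq_sector by (simp add: sets_lebesgue_sector len_bounds)

lemma sets_Tbox [measurable]: "I \<in> D \<Longrightarrow> Tbox I \<in> sets dA"
  unfolding Tbox_eq_sector by (auto intro!: sets_lebesgue_sector dest: len_bounds)

lemma avg_w_finite: "I \<in> D \<Longrightarrow> avg v (Qbox I) (\<lambda>z. ennreal \<bar>w z\<bar>) < top"
  using Binf unfolding Binf_def by blast

lemma vmass_Tbox_finite: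
  assumes "I \<in> D"
  shows "vmass v (Tbox I) < top"
proof -
  have "compact (Tbox I)" "Tbox I \<subseteq> ball 0 1"
    using compact_sector sector_subset_ball len_bounds[OF assms] by (auto simp: Tbox_eq_sector)
  then have "integrable dA (\<lambda>x. indicator (Tbox I) x *\<^sub>R v x)"
    using weight_v unfolding weight_def set_integrable_def by blast
  then have "(\<integral>\<^sup>+x. norm (indicator (Tbox I) x *\<^sub>R v x) \<partial>dA) < \<infinity>"
    by (simp add: integrable_iff_bounded)
  moreover have "vmass v (Tbox I) \<le> (\<integral>\<^sup>+x. norm (indicator (Tbox I) x *\<^sub>R v x) \<partial>dA)"
    unfolding vmass_def by (intro nn_integral_mono) (auto simp: indicator_def ennreal_leI)
  ultimately show ?thesis by (simp add: top_unique less_le_trans)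
qed

lemma vmass_Tbox_pos:
  assumes "I \<in> D"
  shows "0 < vmass v (Tbox I)"
proof (rule ccontr)
  assume "\<not> 0 < vmass v (Tbox I)"
  then have "vmass v (Tbox I) = 0" by (simp add: not_gr_zero)
  then have "AE z in dA. ennreal (v z) * indicator (Tbox I) z = 0"
    unfolding vmass_def using assms by (subst (asm) nn_integral_0_iff_AE) auto
  moreover have "AE z in dA. z \<in> ball 0 1 \<longrightarrow> 0 < v z" using weight_v unfolding weight_def by blast
  ultimately have "AE z in dA. z \<notin> Tbox I"
  proof eventually_elim
    case (elim z)
    moreover have "Tbox I \<subseteq> ball 0 1" by (simp add: Tbox_eq_sector sector_subset_ball)
    ultimately show ?case by (auto simp: indicator_def)
  qed
  then have "negligible (Tbox I)"
    using assms by (intro negligible_of_AE_dA_not_in) (simp_all add: sets_Tbox[simplified])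
  then show False
    using sector_not_negligible[of I "snd I / 2" "snd I"] len_bounds[OF assms] by (auto simp: Tbox_eq_sector)
qed

lemma vmass_Qbox_pos: "I \<in> D \<Longrightarrow> 0 < vmass v (Qbox I)"
  using vmass_Tbox_pos vmass_mono Tbox_subset_Qbox by (meson less_le_trans)

lemma doubling_child:
  assumes "J1 \<in> D" "J \<in> D" "arc_set J1 \<subseteq> arc_set J" "snd J = 2 * snd J1"
  shows "vmass v (Qbox J) \<le> ennreal c * vmass v (Qbox J1)"
    and "vmass v (Qbox J1) \<le> ennreal c * vmass v (Tbox J1)"
proof -
  have "ennreal (1 / c) * vmass v (Qbox J) \<le> vmass v (Qbox J1)"
    and "vmass v (Qbox J1) \<le> ennreal c * vmass v (Tbox J1)"
    using doubling assms unfolding doubling_def arc_len_def by blast+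
  moreover have "vmass v (Qbox J) = ennreal c * (ennreal (1 / c) * vmass v (Qbox J))"
    using c_ge_1 by (simp add: mult.assoc[symmetric] ennreal_mult[symmetric])
  ultimately show "vmass v (Qbox J) \<le> ennreal c * vmass v (Qbox J1)"
    and "vmass v (Qbox J1) \<le> ennreal c * vmass v (Tbox J1)"
    by (metis mult_left_mono zero_le)+
qed

lemma vmass_Qbox_le_child_Tbox:
  assumes "J1 \<in> D" "J \<in> D" "arc_set J1 \<subseteq> arc_set J" "snd J = 2 * snd J1"
  shows "vmass v (Qbox J) \<le> ennreal (c\<^sup>2) * vmass v (Tbox J1)"
proof -
  have "vmass v (Qbox J) \<le> ennreal c * (ennreal c * vmass v (Tbox J1))"
    using doubling_child[OF assms] by (meson order_trans mult_left_mono zero_le)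
  then show ?thesis using c_ge_1 by (simp add: power2_eq_square ennreal_mult mult.assoc)
qed

lemma vmass_Qbox_finite:
  assumes "J \<in> D"
  shows "vmass v (Qbox J) < top"
proof -
  obtain J1 where "J1 \<in> D" "arc_set J1 \<subseteq> arc_set J" "snd J = 2 * snd J1"
    using child_exists[OF assms] by blast
  then have "vmass v (Qbox J) \<le> ennreal (c\<^sup>2) * vmass v (Tbox J1)"
    using vmass_Qbox_le_child_Tbox assms by blast
  also have "\<dots> < top" using vmass_Tbox_finite[OF \<open>J1 \<in> D\<close>] by (simp add: ennreal_mult_less_top)
  finally show ?thesis .
qed

definition wmass :: "complex set \<Rightarrow> ennreal" where
  "wmass E = (\<integral>\<^sup>+ z\<in>E. ennreal \<bar>w z\<bar> * ennreal (v z) \<partial>dA)"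

definition wavg :: "arc \<Rightarrow> real" where
  "wavg J = enn2real (avg v (Qbox J) (\<lambda>z. ennreal \<bar>w z\<bar>))"

abbreviation max_w :: "arc \<Rightarrow> complex \<Rightarrow> ennreal" where
  "max_w J \<equiv> dyadic_max D v (\<lambda>z. ennreal \<bar>w z\<bar> * indicator (Qbox J) z)"

lemma wavg_nonneg [simp]: "0 \<le> wavg J"
  by (simp add: wavg_def)

lemma avg_w_eq: "J \<in> D \<Longrightarrow> avg v (Qbox J) (\<lambda>z. ennreal \<bar>w z\<bar>) = ennreal (wavg J)"
  unfolding wavg_def using avg_w_finite by simp

lemma wmass_mono: "X \<subseteq> Y \<Longrightarrow> wmass X \<le> wmass Y"
  unfolding wmass_def by (intro nn_integral_mono) (auto simp: indicator_def)

lemma wmass_Qbox_eq: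
  assumes "J \<in> D"
  shows "wmass (Qbox J) = ennreal (wavg J) * vmass v (Qbox J)"
proof -
  have "vmass v (Qbox J) \<noteq> 0" "vmass v (Qbox J) < top"
    using vmass_Qbox_pos[OF assms] vmass_Qbox_finite[OF assms] by auto
  then have "wmass (Qbox J) = wmass (Qbox J) / vmass v (Qbox J) * vmass v (Qbox J)"
    by (simp add: ennreal_divide_times)
  also have "wmass (Qbox J) / vmass v (Qbox J) = ennreal (wavg J)"
    using avg_w_eq[OF assms] unfolding avg_def wmass_def vmass_def by simp
  finally show ?thesis .
qed

lemma integral_max_w_le:
  assumes "J \<in> D"
  shows "(\<integral>\<^sup>+ z\<in>Qbox J. max_w J z * ennreal (v z) \<partial>dA) \<le> ennreal B * wmass (Qbox J)"
proof -
  define X where "X = (\<integral>\<^sup>+ z\<in>Qbox J. max_w J z * ennreal (v z) \<partial>dA)"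
  define m where "m = vmass v (Qbox J)"
  have m: "m \<noteq> 0" "m < top" using vmass_Qbox_pos[OF assms] vmass_Qbox_finite[OF assms] by (auto simp: m_def)
  have "avg v (Qbox J) (max_w J) / avg v (Qbox J) (\<lambda>z. ennreal \<bar>w z\<bar>) \<le> Binf_const D v w"
    unfolding Binf_const_def using assms by (rule SUP_upper)
  also have "\<dots> \<le> ennreal B" by (rule Binf_const_le)
  finally have "(X / m) / ennreal (wavg J) \<le> ennreal B"
    using avg_w_eq[OF assms] unfolding avg_def X_def m_def by simp
  then have "X / m \<le> ennreal B * ennreal (wavg J)" by (rule ennreal_le_mult_of_divide_le) simp
  then have "X / m * m \<le> ennreal B * ennreal (wavg J) * m" by (rule mult_right_mono) simp
  moreover have "X / m * m = X" using m by (simp add: ennreal_divide_times)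
  ultimately show ?thesis using wmass_Qbox_eq[OF assms] by (simp add: X_def m_def mult.assoc)
qed

lemma wavg_le_max_w:
  assumes J: "J \<in> D" and K: "K \<in> D" and sub: "arc_set K \<subseteq> arc_set J" and z: "z \<in> Qbox K"
  shows "ennreal (wavg K) \<le> max_w J z"
proof -
  have "Qbox K \<subseteq> Qbox J" using Qbox_mono[OF K J sub] .
  then have "avg v (Qbox K) (\<lambda>z. ennreal \<bar>w z\<bar> * indicator (Qbox J) z) = avg v (Qbox K) (\<lambda>z. ennreal \<bar>w z\<bar>)"
    unfolding avg_def by (intro arg_cong[where f = "\<lambda>x. x / vmass v (Qbox K)"] nn_integral_cong)
      (auto simp: indicator_def)
  then have "ennreal (wavg K) = avg v (Qbox K) (\<lambda>z. ennreal \<bar>w z\<bar> * indicator (Qbox J) z)"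
    using avg_w_eq[OF K] by simp
  also have "\<dots> \<le> max_w J z" unfolding dyadic_max_def using K z by (intro SUP_upper) auto
  finally show ?thesis .
qed

text \<open>APR is applied twice, through a point common to \<^term>\<open>Tbox J\<close> and the top half of a child.\<close>

lemma abs_w_le_on_child_Tbox:
  assumes J: "J \<in> D" and J1: "J1 \<in> D" "arc_set J1 \<subseteq> arc_set J" "snd J = 2 * snd J1"
    and z: "z \<in> Tbox J" and z2: "z2 \<in> Tbox J1"
  shows "\<bar>w z\<bar> \<le> C\<^sup>2 * \<bar>w z2\<bar>"
proof -
  obtain y where y: "y \<in> Tbox J" "y \<in> Tbox J1" using Tbox_Int_child_nonempty[OF J J1(2,3)] by blast
  have "\<bar>w z\<bar> \<le> C * \<bar>w y\<bar>" using APR_bound[OF J z y(1)] .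
  also have "\<dots> \<le> C * (C * \<bar>w z2\<bar>)" using APR_bound[OF J1(1) y(2) z2] C_ge_1 by (intro mult_left_mono) auto
  finally show ?thesis by (simp add: power2_eq_square mult.assoc)
qed

lemma mult_vmass_le_wmass:
  assumes "E \<in> sets dA" "\<And>x. x \<in> E \<Longrightarrow> a \<le> \<bar>w x\<bar>"
  shows "ennreal a * vmass v E \<le> wmass E"
proof -
  have "(\<lambda>x. ennreal (v x) * indicator E x) \<in> borel_measurable dA" using assms(1) by measurable
  then have "ennreal a * vmass v E = (\<integral>\<^sup>+ x. ennreal a * (ennreal (v x) * indicator E x) \<partial>dA)"
    unfolding vmass_def by (simp add: nn_integral_cmult)
  also have "\<dots> \<le> wmass E"
    unfolding wmass_def
  proof (intro nn_integral_mono)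
    fix x
    have "ennreal a * ennreal (v x) \<le> ennreal \<bar>w x\<bar> * ennreal (v x)" if "x \<in> E"
      using assms(2)[OF that] by (intro mult_right_mono ennreal_leI) auto
    then show "ennreal a * (ennreal (v x) * indicator E x) \<le> ennreal \<bar>w x\<bar> * ennreal (v x) * indicator E x"
      by (cases "x \<in> E") (simp_all add: mult.assoc)
  qed
  finally show ?thesis .
qed

lemma one_le_C_sq_c_sq: "1 \<le> C\<^sup>2 * c\<^sup>2"
  using one_le_power[OF C_ge_1, of 2] one_le_power[OF c_ge_1, of 2] mult_mono[of 1 "C\<^sup>2" 1 "c\<^sup>2"] by simp

lemma abs_w_le_wavg:
  assumes J: "J \<in> D" and z: "z \<in> Tbox J"
  shows "\<bar>w z\<bar> \<le> C\<^sup>2 * c\<^sup>2 * wavg J"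
proof -
  obtain J1 where J1: "J1 \<in> D" "arc_set J1 \<subseteq> arc_set J" "snd J = 2 * snd J1"
    using child_exists[OF J] by blast
  define m where "m = vmass v (Tbox J1)"
  have "\<bar>w z\<bar> / C\<^sup>2 \<le> \<bar>w x\<bar>" if "x \<in> Tbox J1" for x
    using abs_w_le_on_child_Tbox[OF J J1 z that] C_ge_1 by (simp add: divide_le_eq mult.commute)
  then have "ennreal (\<bar>w z\<bar> / C\<^sup>2) * m \<le> wmass (Tbox J1)"
    unfolding m_def using sets_Tbox[OF J1(1)] by (intro mult_vmass_le_wmass)
  also have "\<dots> \<le> wmass (Qbox J)"
    using Tbox_subset_Qbox[OF J1(1)] Qbox_mono[OF J1(1) J J1(2)] by (intro wmass_mono) auto
  also have "\<dots> = ennreal (wavg J) * vmass v (Qbox J)" by (rule wmass_Qbox_eq[OF J])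
  also have "\<dots> \<le> ennreal (wavg J) * (ennreal (c\<^sup>2) * m)"
    unfolding m_def using vmass_Qbox_le_child_Tbox[OF J1(1) J J1(2,3)] by (intro mult_left_mono) auto
  also have "\<dots> = ennreal (c\<^sup>2 * wavg J) * m" by (simp add: ennreal_mult mult_ac)
  finally have "m * ennreal (\<bar>w z\<bar> / C\<^sup>2) \<le> m * ennreal (c\<^sup>2 * wavg J)" by (simp add: mult.commute)
  moreover have "m \<noteq> 0" "m \<noteq> top" using vmass_Tbox_pos[OF J1(1)] vmass_Tbox_finite[OF J1(1)] by (auto simp: m_def)
  ultimately have "\<bar>w z\<bar> / C\<^sup>2 \<le> c\<^sup>2 * wavg J" by (simp add: ennreal_mult_le_mult_iff)
  then show ?thesis using C_ge_1 by (simp add: divide_le_eq mult.commute mult.left_commute)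
qed

end

section \<open>Stopping-time decomposition of a truncated maximal function\<close>

locale truncation = weighted_grid D v w c B C for D v w c B C +
  fixes I0 :: arc and N :: nat
  assumes I0_in: "I0 \<in> D"
begin

abbreviation Fam :: "arc set" where
  "Fam \<equiv> descendants I0 N"

lemma finite_Fam: "finite Fam"
  using finite_descendants[OF I0_in] .

lemma I0_in_Fam: "I0 \<in> Fam"
  using I0_in len_bounds[OF I0_in] unfolding descendants_def
  by (auto intro: divide_left_mono simp: divide_le_eq)

lemma Fam_D: "J \<in> Fam \<Longrightarrow> J \<in> D"
  unfolding descendants_def by simp

lemma Fam_subset: "J \<in> Fam \<Longrightarrow> arc_set J \<subseteq> arc_set I0"
  unfolding descendants_def by simp

lemma Qbox_Fam_subset: "J \<in> Fam \<Longrightarrow> Qbox J \<subseteq> Qbox I0"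
  using Qbox_mono[OF Fam_D I0_in Fam_subset] .

text \<open>The dyadic maximal function of \<^term>\<open>w\<close>, truncated to the finitely many boxes of
  \<^term>\<open>Fam\<close>; the truncation keeps every integral below finite.\<close>

definition fmax :: "complex \<Rightarrow> real" where
  "fmax z = Max ((\<lambda>J. wavg J * indicator (Qbox J) z) ` Fam)"

lemma wavg_le_fmax: "J \<in> Fam \<Longrightarrow> z \<in> Qbox J \<Longrightarrow> wavg J \<le> fmax z"
  unfolding fmax_def using finite_Fam by (intro Max_ge_iff[THEN iffD2]) (auto intro!: bexI[of _ J])

lemma fmax_attained: "\<exists>J\<in>Fam. fmax z = wavg J * indicator (Qbox J) z"
proof -
  have "fmax z \<in> (\<lambda>J. wavg J * indicator (Qbox J) z) ` Fam"
    unfolding fmax_def using finite_Fam I0_in_Fam by (intro Max_in) auto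
  then show ?thesis by blast
qed

lemma fmax_cases:
  obtains "fmax z = 0" | J where "J \<in> Fam" "z \<in> Qbox J" "fmax z = wavg J"
proof -
  obtain J where J: "J \<in> Fam" "fmax z = wavg J * indicator (Qbox J) z"
    using fmax_attained by blast
  show ?thesis
  proof (cases "z \<in> Qbox J")
    case True
    then show ?thesis using that(2)[OF J(1) True] J(2) by simp
  next
    case False
    then show ?thesis using that(1) J(2) by simp
  qed
qed

lemma fmax_nonneg: "0 \<le> fmax z"
  by (cases z rule: fmax_cases) auto

lemma fmax_le_Max_wavg: "fmax z \<le> Max (wavg ` Fam)"
proof -
  have le_Max: "wavg J \<le> Max (wavg ` Fam)" if "J \<in> Fam" for J
    using that finite_Fam by (intro Max_ge) auto
  show ?thesis
  proof (cases z rule: fmax_cases)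
    case 1
    then show ?thesis using le_Max[OF I0_in_Fam] wavg_nonneg[of I0] by linarith
  next
    case (2 J)
    then show ?thesis using le_Max by simp
  qed
qed

lemma fmax_measurable [measurable]: "fmax \<in> borel_measurable dA"
  unfolding fmax_def using finite_Fam by (intro borel_measurable_Max) (auto dest: Fam_D)

lemma fmax_le_max_w: "z \<in> Qbox I0 \<Longrightarrow> ennreal (fmax z) \<le> max_w I0 z"
  by (cases z rule: fmax_cases) (auto intro: wavg_le_max_w[OF I0_in Fam_D Fam_subset])

lemma integral_fmax_le:
  "(\<integral>\<^sup>+ z\<in>Qbox I0. ennreal (fmax z) * ennreal (v z) \<partial>dA) \<le> ennreal B * wmass (Qbox I0)"
proof -
  have "(\<integral>\<^sup>+ z\<in>Qbox I0. ennreal (fmax z) * ennreal (v z) \<partial>dA) \<le> (\<integral>\<^sup>+ z\<in>Qbox I0. max_w I0 z * ennreal (v z) \<partial>dA)"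
    using fmax_le_max_w by (intro nn_integral_mono) (auto simp: indicator_def intro: mult_right_mono)
  also have "\<dots> \<le> ennreal B * wmass (Qbox I0)" by (rule integral_max_w_le[OF I0_in])
  finally show ?thesis .
qed

definition heavy :: "real \<Rightarrow> arc set" where
  "heavy l = {J\<in>Fam. l < wavg J}"

definition maximal_heavy :: "real \<Rightarrow> arc set" where
  "maximal_heavy l = {J\<in>heavy l. \<forall>K\<in>heavy l. arc_set J \<subseteq> arc_set K \<longrightarrow> K = J}"

lemma finite_heavy: "finite (heavy l)"
  unfolding heavy_def using finite_Fam by simp

lemma maximal_heavy_subset: "maximal_heavy l \<subseteq> heavy l" "heavy l \<subseteq> Fam"
  unfolding maximal_heavy_def heavy_def by auto

lemma maximal_heavy_D: "J \<in> maximal_heavy l \<Longrightarrow> J \<in> D"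
  using maximal_heavy_subset Fam_D by blast

lemma maximal_heavy_exists:
  assumes "J \<in> heavy l"
  obtains M where "M \<in> maximal_heavy l" "arc_set J \<subseteq> arc_set M"
proof -
  define S where "S = {K\<in>heavy l. arc_set J \<subseteq> arc_set K}"
  have "finite S" unfolding S_def using finite_heavy by simp
  moreover have "J \<in> S" unfolding S_def using assms by simp
  ultimately obtain M where M: "M \<in> S" "snd M = Max (snd ` S)"
    using Max_in[of "snd ` S"] by fastforce
  have "M \<in> maximal_heavy l"
    unfolding maximal_heavy_def
  proof (intro CollectI conjI ballI impI)
    show "M \<in> heavy l" using M(1) unfolding S_def by simp
    fix K assume K: "K \<in> heavy l" "arc_set M \<subseteq> arc_set K"
    have KS: "K \<in> S" using K M(1) unfolding S_def by auto
    have "M \<in> Fam" "K \<in> Fam" using \<open>M \<in> heavy l\<close> K(1) maximal_heavy_subset(2) by blast+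
    then have MD: "M \<in> D" and KD: "K \<in> D" by (simp_all add: Fam_D)
    have "snd K \<le> snd M" using M(2) \<open>finite S\<close> KS by simp
    then have "snd M / 2 < snd K" "snd K / 2 < snd M"
      using len_le_of_subset[OF MD KD K(2)] len_bounds[OF MD] by auto
    then show "K = M" using eq_of_subset_comparable_len[OF MD KD K(2)] by simp
  qed
  then show ?thesis using that M(1) unfolding S_def by blast
qed

lemma negligible_maximal_heavy_Int:
  assumes "M1 \<in> maximal_heavy l" "M2 \<in> maximal_heavy l" "M1 \<noteq> M2"
  shows "negligible (Qbox M1 \<inter> Qbox M2)"
  using assms by (intro negligible_Qbox_Int maximal_heavy_D) (auto simp: maximal_heavy_def)

definition level :: "real \<Rightarrow> complex set" where
  "level l = {z \<in> Qbox I0. l < fmax z}"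

lemma sets_level [measurable]: "level l \<in> sets dA"
proof -
  have "level l = {z\<in>space dA. l < fmax z} \<inter> Qbox I0" unfolding level_def by auto
  also have "\<dots> \<in> sets dA" using I0_in by measurable
  finally show ?thesis .
qed

lemma level_eq_UN:
  assumes "0 \<le> l"
  shows "level l = (\<Union>J\<in>maximal_heavy l. Qbox J)"
proof (intro equalityI subsetI)
  fix z assume "z \<in> level l"
  then have z: "z \<in> Qbox I0" "l < fmax z" unfolding level_def by auto
  then obtain J where J: "J \<in> Fam" "z \<in> Qbox J" "wavg J = fmax z"
    using assms by (cases z rule: fmax_cases) auto
  then have "J \<in> heavy l" using z(2) unfolding heavy_def by simp
  then obtain M where M: "M \<in> maximal_heavy l" "arc_set J \<subseteq> arc_set M"
    using maximal_heavy_exists by blast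
  then have "z \<in> Qbox M" using J(2) Qbox_mono[OF Fam_D[OF J(1)] maximal_heavy_D M(2)] by blast
  then show "z \<in> (\<Union>J\<in>maximal_heavy l. Qbox J)" using M(1) by blast
next
  fix z assume "z \<in> (\<Union>J\<in>maximal_heavy l. Qbox J)"
  then obtain J where J: "J \<in> maximal_heavy l" "z \<in> Qbox J" by blast
  then have JF: "J \<in> Fam" using maximal_heavy_subset by blast
  have "l < wavg J" using J(1) unfolding maximal_heavy_def heavy_def by simp
  also have "\<dots> \<le> fmax z" using wavg_le_fmax[OF JF J(2)] .
  finally show "z \<in> level l" unfolding level_def using Qbox_Fam_subset[OF JF] J(2) by auto
qed

lemma wmass_maximal_heavy_le:
  assumes l: "wavg I0 \<le> l" and J: "J \<in> maximal_heavy l"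
  shows "wmass (Qbox J) \<le> ennreal (c * l) * vmass v (Qbox J)"
proof -
  have JF: "J \<in> Fam" and JD: "J \<in> D" using J maximal_heavy_subset Fam_D by blast+
  have "l < wavg J" using J unfolding maximal_heavy_def heavy_def by simp
  then have "J \<noteq> I0" using l by auto
  then obtain P where P: "P \<in> D" "arc_set P \<subseteq> arc_set I0" "arc_set J \<subseteq> arc_set P" "snd P = 2 * snd J"
    using parent_exists[OF I0_in JD Fam_subset[OF JF]] by blast
  have "P \<in> Fam"
    using P JF len_bounds[OF JD] unfolding descendants_def by auto
  moreover have "P \<notin> heavy l"
  proof
    assume "P \<in> heavy l"
    then have "P = J" using J P(3) unfolding maximal_heavy_def by blast
    then show False using P(4) len_bounds[OF JD] by simp
  qed
  ultimately have "wavg P \<le> l" unfolding heavy_def by simp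
  have "wmass (Qbox J) \<le> wmass (Qbox P)" using Qbox_mono[OF JD P(1) P(3)] by (rule wmass_mono)
  also have "\<dots> = ennreal (wavg P) * vmass v (Qbox P)" using wmass_Qbox_eq[OF P(1)] .
  also have "\<dots> \<le> ennreal l * (ennreal c * vmass v (Qbox J))"
    using \<open>wavg P \<le> l\<close> doubling_child(1)[OF JD P(1) P(3,4)] by (intro mult_mono ennreal_leI) auto
  also have "\<dots> = ennreal (c * l) * vmass v (Qbox J)"
  proof -
    have "0 \<le> l" using l wavg_nonneg[of I0] by linarith
    then show ?thesis using c_ge_1 by (simp add: ennreal_mult mult_ac)
  qed
  finally show ?thesis .
qed

text \<open>On a maximal box, the truncated maximal function is dominated by the dyadic maximal
  function of \<^term>\<open>w\<close> localised to that box: boxes of \<^term>\<open>Fam\<close> not nested with it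
  meet it in a null set, and those strictly above it are not heavy.\<close>

lemma fmax_le_max_w_AE:
  assumes J: "J \<in> maximal_heavy l"
  shows "AE z in dA. z \<in> Qbox J \<longrightarrow> ennreal (fmax z) \<le> max_w J z"
proof -
  have JD: "J \<in> D" using J by (rule maximal_heavy_D)
  have "l < wavg J" using J unfolding maximal_heavy_def heavy_def by simp
  define NS where "NS = {K\<in>Fam. \<not> arc_set K \<subseteq> arc_set J \<and> \<not> arc_set J \<subseteq> arc_set K}"
  have "negligible (\<Union>K\<in>NS. Qbox J \<inter> Qbox K)"
    using finite_Fam JD unfolding NS_def by (intro negligible_Union) (auto intro!: negligible_Qbox_Int Fam_D)
  then show ?thesis
  proof (rule AE_dA_not_in_negligible[THEN eventually_mono], intro impI)
    fix z assume z: "z \<notin> (\<Union>K\<in>NS. Qbox J \<inter> Qbox K)" and zJ: "z \<in> Qbox J"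
    have JJ: "ennreal (wavg J) \<le> max_w J z" using wavg_le_max_w[OF JD JD order_refl zJ] .
    show "ennreal (fmax z) \<le> max_w J z"
    proof (cases z rule: fmax_cases)
      case (2 K)
      then have KD: "K \<in> D" by (simp add: Fam_D)
      have "arc_set K \<subseteq> arc_set J \<or> arc_set J \<subseteq> arc_set K"
        using z zJ 2 unfolding NS_def by blast
      moreover have "wavg K \<le> wavg J" if "arc_set J \<subseteq> arc_set K"
      proof (cases "K = J")
        case False
        then have "K \<notin> heavy l" using J that unfolding maximal_heavy_def by blast
        then show ?thesis using 2(1) \<open>l < wavg J\<close> unfolding heavy_def by simp
      qed simp
      ultimately show ?thesis
        using wavg_le_max_w[OF JD KD _ 2(2)] JJ 2(3) by (auto intro: order_trans[OF ennreal_leI])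
    qed simp
  qed
qed

lemma integral_level_fmax_le:
  assumes l: "wavg I0 \<le> l"
  shows "(\<integral>\<^sup>+ z\<in>level l. ennreal (fmax z) * ennreal (v z) \<partial>dA) \<le> ennreal (B * c * l) * vmass v (level l)"
proof -
  let ?M = "maximal_heavy l"
  have l0: "0 \<le> l" using l wavg_nonneg[of I0] by linarith
  have "finite ?M" using maximal_heavy_subset(1) finite_heavy by (rule finite_subset)
  note M = this sets_Qbox[OF maximal_heavy_D] negligible_maximal_heavy_Int
  have "(\<integral>\<^sup>+ z\<in>level l. ennreal (fmax z) * ennreal (v z) \<partial>dA)
      = (\<Sum>J\<in>?M. \<integral>\<^sup>+ z\<in>Qbox J. ennreal (fmax z) * ennreal (v z) \<partial>dA)"
    unfolding level_eq_UN[OF l0] by (rule nn_integral_UN_almost_disjoint[OF M]) measurable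
  also have "\<dots> \<le> (\<Sum>J\<in>?M. ennreal B * (ennreal (c * l) * vmass v (Qbox J)))"
  proof (rule sum_mono)
    fix J assume J: "J \<in> ?M"
    have "(\<integral>\<^sup>+ z\<in>Qbox J. ennreal (fmax z) * ennreal (v z) \<partial>dA) \<le> (\<integral>\<^sup>+ z\<in>Qbox J. max_w J z * ennreal (v z) \<partial>dA)"
      using fmax_le_max_w_AE[OF J]
      by (intro nn_integral_mono_AE, eventually_elim) (auto simp: indicator_def intro: mult_right_mono)
    also have "\<dots> \<le> ennreal B * wmass (Qbox J)" using integral_max_w_le[OF maximal_heavy_D[OF J]] .
    also have "\<dots> \<le> ennreal B * (ennreal (c * l) * vmass v (Qbox J))"
      using wmass_maximal_heavy_le[OF l J] by (rule mult_left_mono) simp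
    finally show "(\<integral>\<^sup>+ z\<in>Qbox J. ennreal (fmax z) * ennreal (v z) \<partial>dA) \<le> \<dots>" .
  qed
  also have "\<dots> = ennreal (B * c * l) * (\<Sum>J\<in>?M. vmass v (Qbox J))"
    using B_ge_1 c_ge_1 l0 by (simp add: sum_distrib_left ennreal_mult mult_ac)
  also have "(\<Sum>J\<in>?M. vmass v (Qbox J)) = vmass v (level l)"
    unfolding vmass_def level_eq_UN[OF l0] by (rule nn_integral_UN_almost_disjoint[OF M, symmetric]) measurable
  finally show ?thesis .
qed

section \<open>Layer-cake estimate\<close>

lemma level_indicator:
  assumes "0 < wavg I0" "z \<in> Qbox I0"
  shows "indicator (level (wavg I0 * 2 ^ k)) z
    = (if k < layer_index (wavg I0) (fmax z) then 1 else (0::ennreal))"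
  using less_layer_index_iff[OF assms(1)] assms(2) unfolding level_def by (simp add: indicator_def)

lemma fmax_powr_le_layers:
  assumes a: "0 < wavg I0" and e: "0 \<le> e"
  shows "ennreal (fmax z powr (1 + e)) * ennreal (v z) * indicator (Qbox I0) z
    \<le> ennreal (wavg I0 powr e) * (ennreal (fmax z) * ennreal (v z) * indicator (Qbox I0) z)
      + ennreal (2 powr e - 1) * (\<Sum>k. ennreal ((wavg I0 * 2 ^ k) powr e) *
          (ennreal (fmax z) * ennreal (v z) * indicator (level (wavg I0 * 2 ^ k)) z))"
proof (cases "z \<in> Qbox I0")
  case True
  define K where "K = layer_index (wavg I0) (fmax z)"
  define S where "S = (\<Sum>k<K. (wavg I0 * 2 ^ k) powr e)"
  define F where "F = ennreal (fmax z) * ennreal (v z)"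
  have q: "0 \<le> 2 powr e - 1" using e by (simp add: ge_one_powr_ge_zero)
  have "(\<Sum>k. ennreal ((wavg I0 * 2 ^ k) powr e) * (F * indicator (level (wavg I0 * 2 ^ k)) z))
      = (\<Sum>k<K. ennreal ((wavg I0 * 2 ^ k) powr e) * (F * indicator (level (wavg I0 * 2 ^ k)) z))"
    by (rule suminf_finite) (simp_all add: level_indicator[OF a True] K_def)
  also have "\<dots> = (\<Sum>k<K. ennreal ((wavg I0 * 2 ^ k) powr e)) * F"
    by (simp add: level_indicator[OF a True] K_def sum_distrib_right del: sum_ennreal)
  also have "\<dots> = ennreal S * F" unfolding S_def by (subst sum_ennreal) auto
  finally have series: "(\<Sum>k. ennreal ((wavg I0 * 2 ^ k) powr e) * (F * indicator (level (wavg I0 * 2 ^ k)) z))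
      = ennreal S * F" .
  have "fmax z powr (1 + e) = fmax z powr e * fmax z"
    using fmax_nonneg[of z] by (simp add: powr_add)
  also have "\<dots> \<le> (wavg I0 powr e + (2 powr e - 1) * S) * fmax z"
    using powr_le_layer_sum[OF a fmax_nonneg e] fmax_nonneg[of z] unfolding S_def K_def
    by (rule mult_right_mono)
  finally have "ennreal (fmax z powr (1 + e)) * ennreal (v z)
      \<le> ennreal ((wavg I0 powr e + (2 powr e - 1) * S) * fmax z) * ennreal (v z)"
    by (intro mult_right_mono ennreal_leI) auto
  also have "\<dots> = ennreal (wavg I0 powr e) * F + ennreal (2 powr e - 1) * (ennreal S * F)"
    using q fmax_nonneg[of z] unfolding F_def S_def
    by (simp add: ennreal_mult ennreal_plus sum_nonneg distrib_left distrib_right mult_ac)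
  finally show ?thesis using True series unfolding F_def by simp
qed simp

lemma layers_le_fmax_powr:
  assumes a: "0 < wavg I0" and e: "0 \<le> e"
  shows "(\<Sum>k. ennreal ((wavg I0 * 2 ^ k) powr (1 + e)) * (ennreal (v z) * indicator (level (wavg I0 * 2 ^ k)) z))
    \<le> 2 * (ennreal (fmax z powr (1 + e)) * ennreal (v z) * indicator (Qbox I0) z)"
proof (cases "z \<in> Qbox I0")
  case True
  define K where "K = layer_index (wavg I0) (fmax z)"
  have "(\<Sum>k. ennreal ((wavg I0 * 2 ^ k) powr (1 + e)) * (ennreal (v z) * indicator (level (wavg I0 * 2 ^ k)) z))
      = (\<Sum>k<K. ennreal ((wavg I0 * 2 ^ k) powr (1 + e)) * (ennreal (v z) * indicator (level (wavg I0 * 2 ^ k)) z))"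
    by (rule suminf_finite) (simp_all add: level_indicator[OF a True] K_def)
  also have "\<dots> = (\<Sum>k<K. ennreal ((wavg I0 * 2 ^ k) powr (1 + e))) * ennreal (v z)"
    by (simp add: level_indicator[OF a True] K_def sum_distrib_right del: sum_ennreal)
  also have "\<dots> = ennreal (\<Sum>k<K. (wavg I0 * 2 ^ k) powr (1 + e)) * ennreal (v z)"
    by (subst sum_ennreal) auto
  also have "\<dots> \<le> ennreal (2 * fmax z powr (1 + e)) * ennreal (v z)"
    using layer_sum_powr_le[OF a fmax_nonneg, of "1 + e"] e unfolding K_def
    by (intro mult_right_mono ennreal_leI) auto
  finally show ?thesis using True by (simp add: ennreal_mult mult.assoc)
next
  case False
  then show ?thesis by (simp add: level_def)
qed

lemma integral_fmax_powr_finite: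
  assumes "0 \<le> e"
  shows "(\<integral>\<^sup>+ z\<in>Qbox I0. ennreal (fmax z powr (1 + e)) * ennreal (v z) \<partial>dA) < top"
proof -
  define M where "M = Max (wavg ` Fam) powr (1 + e)"
  have "(\<integral>\<^sup>+ z\<in>Qbox I0. ennreal (fmax z powr (1 + e)) * ennreal (v z) \<partial>dA)
      \<le> (\<integral>\<^sup>+ z\<in>Qbox I0. ennreal M * ennreal (v z) \<partial>dA)"
    unfolding M_def using fmax_le_Max_wavg fmax_nonneg assms
    by (intro nn_integral_mono mult_right_mono ennreal_leI powr_mono2) (auto simp: indicator_def)
  also have "\<dots> = ennreal M * vmass v (Qbox I0)"
    unfolding vmass_def using I0_in by (simp add: nn_integral_cmult mult.assoc)
  also have "\<dots> < top" using vmass_Qbox_finite[OF I0_in] by (simp add: ennreal_mult_less_top)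
  finally show ?thesis .
qed

lemma integral_layers_le:
  assumes a: "0 < wavg I0" and e: "0 \<le> e"
  shows "(\<Sum>k. ennreal ((wavg I0 * 2 ^ k) powr (1 + e)) * vmass v (level (wavg I0 * 2 ^ k)))
    \<le> 2 * (\<integral>\<^sup>+ z\<in>Qbox I0. ennreal (fmax z powr (1 + e)) * ennreal (v z) \<partial>dA)"
proof -
  have "(\<Sum>k. ennreal ((wavg I0 * 2 ^ k) powr (1 + e)) * vmass v (level (wavg I0 * 2 ^ k)))
      = (\<integral>\<^sup>+ z. (\<Sum>k. ennreal ((wavg I0 * 2 ^ k) powr (1 + e)) *
          (ennreal (v z) * indicator (level (wavg I0 * 2 ^ k)) z)) \<partial>dA)"
    unfolding vmass_def by (simp add: nn_integral_suminf nn_integral_cmult)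
  also have "\<dots> \<le> (\<integral>\<^sup>+ z. 2 * (ennreal (fmax z powr (1 + e)) * ennreal (v z) * indicator (Qbox I0) z) \<partial>dA)"
    using layers_le_fmax_powr[OF a e] by (intro nn_integral_mono) simp
  also have "\<dots> = 2 * (\<integral>\<^sup>+ z\<in>Qbox I0. ennreal (fmax z powr (1 + e)) * ennreal (v z) \<partial>dA)"
    using I0_in by (simp add: nn_integral_cmult)
  finally show ?thesis .
qed

lemma integral_fmax_powr_le_layers:
  assumes a: "0 < wavg I0" and e: "0 \<le> e"
  shows "(\<integral>\<^sup>+ z\<in>Qbox I0. ennreal (fmax z powr (1 + e)) * ennreal (v z) \<partial>dA)
    \<le> ennreal (B * wavg I0 powr (1 + e)) * vmass v (Qbox I0)
      + ennreal ((2 powr e - 1) * B * c) *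
        (\<Sum>k. ennreal ((wavg I0 * 2 ^ k) powr (1 + e)) * vmass v (level (wavg I0 * 2 ^ k)))"
proof -
  define q where "q = (2::real) powr e - 1"
  define F0 where "F0 z = ennreal (fmax z) * ennreal (v z) * indicator (Qbox I0) z" for z
  define G where "G k z = ennreal (fmax z) * ennreal (v z) * indicator (level (wavg I0 * 2 ^ k)) z" for k z
  have [measurable]: "F0 \<in> borel_measurable dA" "G k \<in> borel_measurable dA" for k
    unfolding F0_def G_def using I0_in by measurable
  have q: "0 \<le> q" unfolding q_def using e by (simp add: ge_one_powr_ge_zero)
  have "(\<integral>\<^sup>+ z\<in>Qbox I0. ennreal (fmax z powr (1 + e)) * ennreal (v z) \<partial>dA)
      \<le> (\<integral>\<^sup>+ z. ennreal (wavg I0 powr e) * F0 z + ennreal q * (\<Sum>k. ennreal ((wavg I0 * 2 ^ k) powr e) * G k z) \<partial>dA)"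
    unfolding F0_def G_def q_def using fmax_powr_le_layers[OF a e] by (intro nn_integral_mono) simp
  also have "\<dots> = ennreal (wavg I0 powr e) * integral\<^sup>N dA F0
      + ennreal q * (\<Sum>k. ennreal ((wavg I0 * 2 ^ k) powr e) * integral\<^sup>N dA (G k))"
    by (simp add: nn_integral_add nn_integral_cmult nn_integral_suminf)
  also have "\<dots> \<le> ennreal (wavg I0 powr e) * (ennreal B * wmass (Qbox I0))
      + ennreal q * (\<Sum>k. ennreal ((wavg I0 * 2 ^ k) powr e) *
          (ennreal (B * c * (wavg I0 * 2 ^ k)) * vmass v (level (wavg I0 * 2 ^ k))))"
    unfolding F0_def G_def using integral_fmax_le integral_level_fmax_le a
    by (intro add_mono mult_left_mono suminf_le) auto
  also have "\<dots> = ennreal (B * wavg I0 powr (1 + e)) * vmass v (Qbox I0)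
      + ennreal (q * B * c) * (\<Sum>k. ennreal ((wavg I0 * 2 ^ k) powr (1 + e)) * vmass v (level (wavg I0 * 2 ^ k)))"
  proof -
    have "(\<Sum>k. ennreal ((wavg I0 * 2 ^ k) powr e) *
          (ennreal (B * c * (wavg I0 * 2 ^ k)) * vmass v (level (wavg I0 * 2 ^ k))))
        = ennreal (B * c) * (\<Sum>k. ennreal ((wavg I0 * 2 ^ k) powr (1 + e)) * vmass v (level (wavg I0 * 2 ^ k)))"
      using a B_ge_1 c_ge_1 by (simp add: ennreal_powr_mult_self ennreal_suminf_cmult)
    moreover have "ennreal (wavg I0 powr e) * (ennreal B * wmass (Qbox I0))
        = ennreal (B * wavg I0 powr (1 + e)) * vmass v (Qbox I0)"
      using a B_ge_1 by (simp add: wmass_Qbox_eq[OF I0_in] powr_add ennreal_mult mult_ac)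
    ultimately show ?thesis using q B_ge_1 c_ge_1 by (simp add: ennreal_mult mult.assoc)
  qed
  finally show ?thesis unfolding q_def .
qed

lemma wavg_eq_0_of_Fam:
  assumes "wavg I0 = 0" "J \<in> Fam"
  shows "wavg J = 0"
proof -
  have JD: "J \<in> D" using assms(2) by (rule Fam_D)
  have "ennreal (wavg J) * vmass v (Qbox J) = wmass (Qbox J)" using wmass_Qbox_eq[OF JD] by simp
  also have "\<dots> \<le> wmass (Qbox I0)" using Qbox_Fam_subset[OF assms(2)] by (rule wmass_mono)
  also have "\<dots> = 0" using wmass_Qbox_eq[OF I0_in] assms(1) by simp
  finally show ?thesis using vmass_Qbox_pos[OF JD] wavg_nonneg[of J] by (auto simp: ennreal_eq_0_iff)
qed

text \<open>The Gehring-type absorption: for small \<^term>\<open>e\<close> the layer term is at most half of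
  the integral being estimated, which is finite because of the truncation.\<close>

lemma integral_fmax_powr_le:
  assumes e: "0 < e" and small: "(2 powr e - 1) * (2 * B * c) \<le> 1 / 2"
  shows "(\<integral>\<^sup>+ z\<in>Qbox I0. ennreal (fmax z powr (1 + e)) * ennreal (v z) \<partial>dA)
    \<le> ennreal (2 * B * wavg I0 powr (1 + e)) * vmass v (Qbox I0)"
proof (cases "wavg I0 = 0")
  case True
  then have "fmax z = 0" for z by (cases z rule: fmax_cases) (auto dest: wavg_eq_0_of_Fam)
  then show ?thesis by simp
next
  case False
  then have a: "0 < wavg I0" using wavg_nonneg[of I0] by linarith
  define I where "I = (\<integral>\<^sup>+ z\<in>Qbox I0. ennreal (fmax z powr (1 + e)) * ennreal (v z) \<partial>dA)"
  define X where "X = ennreal (B * wavg I0 powr (1 + e)) * vmass v (Qbox I0)"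
  define r where "r = (2 powr e - 1) * B * c"
  have "0 \<le> r" unfolding r_def using e B_ge_1 c_ge_1 by (simp add: ge_one_powr_ge_zero)
  have "I \<le> X + ennreal r * (\<Sum>k. ennreal ((wavg I0 * 2 ^ k) powr (1 + e)) * vmass v (level (wavg I0 * 2 ^ k)))"
    unfolding I_def X_def r_def using integral_fmax_powr_le_layers[OF a] e by simp
  also have "\<dots> \<le> X + ennreal r * (2 * I)"
    unfolding I_def using integral_layers_le[OF a] e by (intro add_left_mono mult_left_mono) auto
  also have "ennreal r * (2 * I) = ennreal (2 * r) * I"
    using \<open>0 \<le> r\<close> by (simp add: ennreal_mult mult_ac)
  also have "\<dots> \<le> ennreal (1 / 2) * I"
    using small unfolding r_def by (intro mult_right_mono ennreal_leI) (auto simp: mult_ac)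
  finally have "I \<le> 2 * X"
    using integral_fmax_powr_finite e unfolding I_def by (intro ennreal_absorb_half) auto
  then show ?thesis using B_ge_1 unfolding I_def X_def by (simp add: ennreal_mult mult.assoc)
qed

lemma abs_w_le_fmax:
  assumes "z \<in> sector I0 (snd I0 / 2 ^ (N + 1)) (snd I0)"
  shows "\<bar>w z\<bar> \<le> C\<^sup>2 * c\<^sup>2 * fmax z"
proof -
  obtain J where J: "J \<in> Fam" "z \<in> Tbox J" using Tbox_cover[OF I0_in assms] by blast
  have "\<bar>w z\<bar> \<le> C\<^sup>2 * c\<^sup>2 * wavg J" using abs_w_le_wavg[OF Fam_D J(2)] J(1) .
  also have "\<dots> \<le> C\<^sup>2 * c\<^sup>2 * fmax z"
    using wavg_le_fmax[OF J(1)] Tbox_subset_Qbox[OF Fam_D[OF J(1)]] J(2) by (intro mult_left_mono) auto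
  finally show ?thesis .
qed

lemma integral_sector_w_powr_le:
  assumes e: "0 < e" and small: "(2 powr e - 1) * (2 * B * c) \<le> 1 / 2"
  shows "(\<integral>\<^sup>+ z\<in>sector I0 (snd I0 / 2 ^ (N + 1)) (snd I0). ennreal (\<bar>w z\<bar> powr (1 + e)) * ennreal (v z) \<partial>dA)
    \<le> ennreal ((C\<^sup>2 * c\<^sup>2) powr (1 + e) * (2 * B * wavg I0 powr (1 + e))) * vmass v (Qbox I0)"
proof -
  define K where "K = C\<^sup>2 * c\<^sup>2"
  let ?A = "sector I0 (snd I0 / 2 ^ (N + 1)) (snd I0)"
  have "(\<integral>\<^sup>+ z\<in>?A. ennreal (\<bar>w z\<bar> powr (1 + e)) * ennreal (v z) \<partial>dA)
      \<le> (\<integral>\<^sup>+ z\<in>Qbox I0. ennreal (K powr (1 + e)) * (ennreal (fmax z powr (1 + e)) * ennreal (v z)) \<partial>dA)"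
  proof (intro nn_integral_mono)
    fix z
    have "\<bar>w z\<bar> powr (1 + e) \<le> K powr (1 + e) * fmax z powr (1 + e)" if "z \<in> ?A"
      using abs_w_le_fmax[OF that] e one_le_C_sq_c_sq fmax_nonneg[of z] unfolding K_def
      by (simp add: powr_mult[symmetric] powr_mono2)
    then have "ennreal (\<bar>w z\<bar> powr (1 + e)) * ennreal (v z)
        \<le> ennreal (K powr (1 + e)) * (ennreal (fmax z powr (1 + e)) * ennreal (v z))" if "z \<in> ?A"
      using that by (simp add: mult.assoc[symmetric] ennreal_mult[symmetric] mult_right_mono ennreal_leI)
    moreover have "?A \<subseteq> Qbox I0" using len_bounds[OF I0_in] by (simp add: Qbox_eq_sector sector_mono)
    ultimately show "ennreal (\<bar>w z\<bar> powr (1 + e)) * ennreal (v z) * indicator ?A z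
        \<le> ennreal (K powr (1 + e)) * (ennreal (fmax z powr (1 + e)) * ennreal (v z)) * indicator (Qbox I0) z"
      by (auto simp: indicator_def)
  qed
  also have "\<dots> = ennreal (K powr (1 + e)) * (\<integral>\<^sup>+ z\<in>Qbox I0. ennreal (fmax z powr (1 + e)) * ennreal (v z) \<partial>dA)"
    using I0_in by (simp add: nn_integral_cmult mult.assoc)
  also have "\<dots> \<le> ennreal (K powr (1 + e)) * (ennreal (2 * B * wavg I0 powr (1 + e)) * vmass v (Qbox I0))"
    using integral_fmax_powr_le[OF e small] by (rule mult_left_mono) simp
  finally show ?thesis using B_ge_1 unfolding K_def by (simp add: ennreal_mult mult.assoc)
qed

end

context weighted_grid
begin

lemma integral_w_powr_le:
  assumes I0: "I0 \<in> D" and e: "0 < e" and small: "(2 powr e - 1) * (2 * B * c) \<le> 1 / 2"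
  shows "(\<integral>\<^sup>+ z\<in>Qbox I0. ennreal (\<bar>w z\<bar> powr (1 + e)) * ennreal (v z) \<partial>dA)
    \<le> ennreal ((C\<^sup>2 * c\<^sup>2) powr (1 + e) * (2 * B * wavg I0 powr (1 + e))) * vmass v (Qbox I0)"
proof -
  let ?A = "\<lambda>N. sector I0 (snd I0 / 2 ^ (N + 1)) (snd I0)"
  have Qbox_UN: "Qbox I0 = (\<Union>N. ?A N)"
    unfolding Qbox_eq_sector using len_bounds[OF I0] by (intro sector_eq_UN) simp
  have "incseq ?A" using len_bounds[OF I0] by (intro incseq_sector) simp
  moreover have "?A N \<in> sets dA" for N using len_bounds[OF I0] by (simp add: sets_lebesgue_sector)
  moreover have "(\<integral>\<^sup>+ z\<in>?A N. ennreal (\<bar>w z\<bar> powr (1 + e)) * ennreal (v z) \<partial>dA)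
      \<le> ennreal ((C\<^sup>2 * c\<^sup>2) powr (1 + e) * (2 * B * wavg I0 powr (1 + e))) * vmass v (Qbox I0)" for N
  proof -
    interpret truncation D v w c B C I0 N by unfold_locales (rule I0)
    show ?thesis using integral_sector_w_powr_le[OF e small] .
  qed
  ultimately have "(\<integral>\<^sup>+ z\<in>(\<Union>N. ?A N). ennreal (\<bar>w z\<bar> powr (1 + e)) * ennreal (v z) \<partial>dA)
      \<le> ennreal ((C\<^sup>2 * c\<^sup>2) powr (1 + e) * (2 * B * wavg I0 powr (1 + e))) * vmass v (Qbox I0)"
    by (intro set_nn_integral_le_of_incseq) auto
  then show ?thesis unfolding Qbox_UN[symmetric] .
qed

lemma avgp_div_avg_le:
  assumes I0: "I0 \<in> D" and e: "0 < e" and small: "(2 powr e - 1) * (2 * B * c) \<le> 1 / 2"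
  shows "avgp (1 + e) v (Qbox I0) w / avg v (Qbox I0) (\<lambda>z. ennreal \<bar>w z\<bar>)
    \<le> ennreal (C\<^sup>2 * c\<^sup>2 * (2 * B) powr (1 / (1 + e)))"
proof -
  define t where "t = 1 + e"
  define K where "K = C\<^sup>2 * c\<^sup>2"
  define a where "a = wavg I0"
  define m where "m = vmass v (Qbox I0)"
  define A where "A = avg v (Qbox I0) (\<lambda>z. ennreal (\<bar>w z\<bar> powr t))"
  define X where "X = K powr t * (2 * B * a powr t)"
  have t: "1 < t" unfolding t_def using e by simp
  have m: "m \<noteq> 0" "m < top" unfolding m_def using vmass_Qbox_pos[OF I0] vmass_Qbox_finite[OF I0] by auto
  have K: "0 \<le> K" and a: "0 \<le> a" and X: "0 \<le> X" unfolding K_def a_def X_def using B_ge_1 by auto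
  have "A \<le> ennreal X * m / m"
    unfolding A_def avg_def vmass_def[symmetric] m_def[symmetric] X_def K_def a_def t_def
    using integral_w_powr_le[OF I0 e small] unfolding m_def by (rule divide_right_mono_ennreal)
  also have "\<dots> = ennreal X" using m by (simp add: ennreal_mult_divide_eq)
  finally have "A \<le> ennreal X" .
  then have A_top: "A \<noteq> top" and "enn2real A \<le> X" using X by (auto simp: top_unique enn2real_leI)
  then have "enn2real A powr (1 / t) \<le> X powr (1 / t)" using t by (intro powr_mono2) auto
  also have "X powr (1 / t) = K * (2 * B) powr (1 / t) * a"
    using t K a B_ge_1 unfolding X_def by (simp add: powr_mult powr_powr)
  finally have "avgp t v (Qbox I0) w \<le> ennreal (K * (2 * B) powr (1 / t) * a)"
    unfolding avgp_def A_def[symmetric] Let_def using A_top by (simp add: ennreal_leI)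
  then have "avgp t v (Qbox I0) w / ennreal a \<le> ennreal (K * (2 * B) powr (1 / t) * a) / ennreal a"
    by (rule divide_right_mono_ennreal)
  also have "\<dots> \<le> ennreal (K * (2 * B) powr (1 / t))"
  proof (cases "a = 0")
    case False
    then show ?thesis using K a divide_ennreal[of "K * (2 * B) powr (1 / t) * a" a] by simp
  qed simp
  finally show ?thesis unfolding t_def K_def a_def avg_w_eq[OF I0] .
qed

lemma RH_of_small_exponent:
  assumes e: "0 < e" and small: "(2 powr e - 1) * (2 * B * c) \<le> 1 / 2"
  shows "RH D v (1 + e) w"
  unfolding RH_def
proof (intro conjI ballI)
  have "(SUP I\<in>D. avgp (1 + e) v (Qbox I) w / avg v (Qbox I) (\<lambda>z. ennreal \<bar>w z\<bar>))
      \<le> ennreal (C\<^sup>2 * c\<^sup>2 * (2 * B) powr (1 / (1 + e)))"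
    using avgp_div_avg_le[OF _ e small] by (rule SUP_least)
  also have "\<dots> < top" by simp
  finally show "(SUP I\<in>D. avgp (1 + e) v (Qbox I) w / avg v (Qbox I) (\<lambda>z. ennreal \<bar>w z\<bar>)) < top" .
qed (use e avg_w_finite in auto)

end

lemma exists_small_exponent:
  fixes X :: real
  assumes "0 \<le> X"
  obtains e where "0 < e" "(2 powr e - 1) * X \<le> 1 / 2"
proof
  define e where "e = log 2 (1 + 1 / (2 * X + 1))"
  have "0 < 1 / (2 * X + 1)" using assms by simp
  then show "0 < e" unfolding e_def by (subst zero_less_log_cancel_iff) linarith+
  have "2 powr e = 1 + 1 / (2 * X + 1)" unfolding e_def using assms by (simp add: add_pos_nonneg)
  then have "(2 powr e - 1) * X = X / (2 * X + 1)" by simp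
  also have "\<dots> \<le> 1 / 2" using assms by (simp add: field_simps)
  finally show "(2 powr e - 1) * X \<le> 1 / 2" .
qed

lemma APR_abs_bound:
  assumes "APR D w"
  obtains C where "1 \<le> C" "\<And>I z1 z2. I \<in> D \<Longrightarrow> z1 \<in> Tbox I \<Longrightarrow> z2 \<in> Tbox I \<Longrightarrow> \<bar>w z1\<bar> \<le> C * \<bar>w z2\<bar>"
proof -
  obtain C where C: "0 < C" "\<And>I z1 z2. I \<in> D \<Longrightarrow> z1 \<in> Tbox I \<Longrightarrow> z2 \<in> Tbox I \<Longrightarrow> w z2 / C \<le> w z1 \<and> w z1 \<le> C * w z2"
    using assms unfolding APR_def by blast
  have "\<bar>w z1\<bar> \<le> max C (1 / C) * \<bar>w z2\<bar>" if "I \<in> D" "z1 \<in> Tbox I" "z2 \<in> Tbox I" for I z1 z2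
  proof -
    have h: "w z2 / C \<le> w z1" "w z1 \<le> C * w z2" using C(2)[OF that] by auto
    have "\<bar>w z1\<bar> \<le> C * \<bar>w z2\<bar> \<or> \<bar>w z1\<bar> \<le> 1 / C * \<bar>w z2\<bar>"
    proof (cases "0 \<le> w z2")
      case True
      then have "0 \<le> w z2 / C" using C(1) by simp
      then show ?thesis using h True by simp
    next
      case False
      then have "C * w z2 < 0" using C(1) by (simp add: mult_pos_neg)
      moreover have "1 / C * \<bar>w z2\<bar> = - (w z2 / C)" using False by simp
      ultimately show ?thesis using h by linarith
    qed
    moreover have "C * \<bar>w z2\<bar> \<le> max C (1 / C) * \<bar>w z2\<bar>" "1 / C * \<bar>w z2\<bar> \<le> max C (1 / C) * \<bar>w z2\<bar>"
      by (intro mult_right_mono; simp)+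
    ultimately show ?thesis by linarith
  qed
  moreover have "1 \<le> max C (1 / C)"
  proof (cases "1 \<le> C")
    case False
    then have "1 \<le> 1 / C" using C(1) by simp
    then show ?thesis by simp
  qed simp
  ultimately show ?thesis using that by blast
qed

lemma doubling_mono:
  assumes "doubling D v c" "c \<le> c'"
  shows "doubling D v c'"
  unfolding doubling_def
proof (intro conjI ballI impI)
  have c: "0 < c" using assms(1) unfolding doubling_def by simp
  then show "0 < c'" using assms(2) by simp
  fix I J assume "I \<in> D" "J \<in> D" "arc_set I \<subseteq> arc_set J \<and> arc_len J = 2 * arc_len I"
  then have h: "ennreal (1 / c) * vmass v (Qbox J) \<le> vmass v (Qbox I)"
      "vmass v (Qbox I) \<le> ennreal c * vmass v (Tbox I)"
    using assms(1) unfolding doubling_def by blast+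
  have "ennreal (1 / c') * vmass v (Qbox J) \<le> ennreal (1 / c) * vmass v (Qbox J)"
    using c assms(2) by (intro mult_right_mono ennreal_leI) (simp_all add: frac_le)
  then show "ennreal (1 / c') * vmass v (Qbox J) \<le> vmass v (Qbox I)" using h(1) by (rule order_trans)
  have "ennreal c * vmass v (Tbox I) \<le> ennreal c' * vmass v (Tbox I)"
    using assms(2) by (intro mult_right_mono ennreal_leI) auto
  then show "vmass v (Qbox I) \<le> ennreal c' * vmass v (Tbox I)" using h(2) by (rule order_trans[rotated])
qed

theorem proposition3p4:
  fixes B c :: real
  shows "\<exists>\<tau>>1. \<forall>D v w. dyadic_grid D \<and> weight v \<and> doubling D v c \<and>
           weight w \<and> Binf D v w \<and> Binf_const D v w = ennreal B \<and> APR D w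
           \<longrightarrow> RH D v \<tau> w"
proof -
  obtain e where e: "0 < e" "(2 powr e - 1) * (2 * max B 1 * max c 1) \<le> 1 / 2"
    using exists_small_exponent[of "2 * max B 1 * max c 1"] by auto
  show ?thesis
  proof (intro exI[of _ "1 + e"] conjI allI impI)
    show "1 < 1 + e" using e(1) by simp
    fix D v w
    assume H: "dyadic_grid D \<and> weight v \<and> doubling D v c \<and> weight w \<and> Binf D v w
      \<and> Binf_const D v w = ennreal B \<and> APR D w"
    then obtain C where "1 \<le> C" "\<And>I z1 z2. I \<in> D \<Longrightarrow> z1 \<in> Tbox I \<Longrightarrow> z2 \<in> Tbox I \<Longrightarrow> \<bar>w z1\<bar> \<le> C * \<bar>w z2\<bar>"
      using APR_abs_bound by blast
    with H interpret weighted_grid D v w "max c 1" "max B 1" C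
      by unfold_locales (auto intro: doubling_mono ennreal_leI)
    show "RH D v (1 + e) w" using e by (rule RH_of_small_exponent)
  qed
qed

end
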